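(* Under the setting and Hypothesis (H) of the context, fix $u,v\in\mathcal U$. Then for every $\rho\in(0,1)$ there exists a Borel set $I_\rho\subset[0,T]$ with Lebesgue measure $|I_\rho|=\rho T$ such that, defining for $t\in[0,T]$ $$\eta^*_t:=\rho\int_0^t\Delta b(s;v)\,ds-\int_{I_\rho\cap[0,t]}\Delta b(s;v)\,ds,$$ one has $\sup_{0\le t\le T}\mathbb E|\eta^*_t|^2=o(\rho^4)$ as $\rho\to0+$.
   Context: Let $T>0$, $(\Omega,\mathcal F,P)$ a complete probability space with a $d$-dimensional Brownian motion $B$ and its augmented natural filtration $(\mathcal F_t)$. $\mathcal P_2(\mathbb R^n)$: probability measures on $\mathbb R^n$ with finite second moment, 2-Wasserstein metric; $P_\xi$ is the law of $\xi$; measure derivatives are Lions derivatives. $U\subset\mathbb R^k$; $\mathcal U$: $(\mathcal F_t)$-adapted $U$-valued processes $v$ with $\sup_t\mathbb E|v_t|^8<\infty$. Coefficients $b:[0,T]\times\mathbb R^n\times\mathcal P_2(\mathbb R^n)\times U\to\mathbb R^n$, $\sigma:[0,T]\times\mathbb R^n\times\mathcal P_2(\mathbb R^n)\to\mathbb R^{n\times d}$, $h,\Phi$ real valued, satisfying Hypothesis (H): (1) $b,\sigma,h,\Phi$ differentiable in $(x,\mu,v)$, $b,\sigma$ Lipschitz in $(x,\mu,v)$; (2) first-order $(x,\mu)$-derivatives of $b,\sigma$ Lipschitz and bounded; (3) first-order $(x,\mu)$-derivatives of $h,\Phi$ Lipschitz and bounded by $C(1+|x|+|v|)$; (4) second-order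 $(x,\mu)$-derivatives of $b,\sigma,h,\Phi$ continuous, bounded and Borel in $(t,x,\mu,v)$. $X^u$ solves $dX_t=b(t,X_t,P_{X_t},u_t)dt+\sigma(t,X_t,P_{X_t})dB_t$, $X_0=x$. $\Delta b(t;v):=b(t,X^u_t,P_{X^u_t},v_t)-b(t,X^u_t,P_{X^u_t},u_t)$. *)

theory Defs
  imports "HOL-Probability.Probability"
begin

definition law :: "'a measure \<Rightarrow> ('a \<Rightarrow> 'b::topological_space) \<Rightarrow> 'b measure" where
  "law M \<xi> = distr M borel \<xi>"

definition P2 :: "('b::real_normed_vector) measure set" where
  "P2 = {\<mu>. sets \<mu> = sets borel \<and> prob_space \<mu> \<and> (\<integral>\<^sup>+ x. ennreal (norm x ^ 2) \<partial>\<mu>) < \<infinity>}"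

definition Delta_b ::
  "'a measure \<Rightarrow> (real \<Rightarrow> 'n \<Rightarrow> 'n measure \<Rightarrow> 'k \<Rightarrow> 'n::real_normed_vector)
   \<Rightarrow> (real \<Rightarrow> 'a \<Rightarrow> 'n) \<Rightarrow> (real \<Rightarrow> 'a \<Rightarrow> 'k) \<Rightarrow> (real \<Rightarrow> 'a \<Rightarrow> 'k) \<Rightarrow> real \<Rightarrow> 'a \<Rightarrow> 'n" where
  "Delta_b M b X u v t \<omega> =
     b t (X t \<omega>) (law M (X t)) (v t \<omega>) - b t (X t \<omega>) (law M (X t)) (u t \<omega>)"

definition couplings :: "'b::topological_space measure \<Rightarrow> 'b measure \<Rightarrow> ('b \<times> 'b) measure set" where
  "couplings \<mu> \<nu> = {\<pi>. sets \<pi> = sets borel \<and> prob_space \<pi> \<and>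
      distr \<pi> borel fst = \<mu> \<and> distr \<pi> borel snd = \<nu>}"

definition W2 :: "'b::real_normed_vector measure \<Rightarrow> 'b measure \<Rightarrow> real" where
  "W2 \<mu> \<nu> = sqrt (enn2real (INF \<pi>\<in>couplings \<mu> \<nu>. \<integral>\<^sup>+ p. ennreal (norm (fst p - snd p) ^ 2) \<partial>\<pi>))"

end

theory Submission
  imports Defs
begin

text \<open>Extend \<open>\<Delta>b\<close> by zero outside \<open>[0, T]\<close>; by the Lipschitz hypothesis and the moment
  bounds its second moment is bounded by some \<open>K\<close> uniformly in time, which is all the
  proof uses.
  Fix \<open>\<rho>\<close>, split \<open>[0, T]\<close> into \<open>m\<close> blocks of \<open>m\<close> cells and in every block select \<open>q = \<lfloor>\<rho> m\<rfloor>\<close>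
  cells, namely those whose position shifted cyclically by some \<open>j < m\<close> is below \<open>q\<close>.
  Summed over the \<open>m\<close> shifts, the errors \<open>\<integral> (q/m - \<one>\<^sub>I) \<Delta>b\<close> over one block cancel, so the cross
  terms with the error accumulated on the previous blocks cancel on average and some shift
  increases the mean square error by at most \<open>(T/m)\<^sup>2 K\<close>. Choosing the shifts block by block
  keeps the error at the block boundaries below \<open>T\<^sup>2 K / m\<close>; the incomplete block containing
  \<open>t\<close> and the missing measure \<open>(\<rho> - q/m) T < T/m\<close> cost \<open>O(T\<^sup>2 K / m)\<close> as well. Taking \<open>m\<close>
  large for each \<open>\<rho>\<close> makes the error \<open>\<le> \<rho>\<^sup>5 = o(\<rho>\<^sup>4)\<close> uniformly in \<open>t\<close>.\<close>

section \<open>Mean squares and Lebesgue measure\<close>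

definition mean_square :: "'a measure \<Rightarrow> ('a \<Rightarrow> 'b::real_normed_vector) \<Rightarrow> ennreal" where
  "mean_square M f = (\<integral>\<^sup>+\<omega>. ennreal (norm (f \<omega>) ^ 2) \<partial>M)"

lemma mean_square_cong_AE: "AE \<omega> in M. f \<omega> = g \<omega> \<Longrightarrow> mean_square M f = mean_square M g"
  unfolding mean_square_def by (rule nn_integral_cong_AE) auto

lemma norm_add_sq_le: "norm (x + y) ^ 2 \<le> 2 * (norm x ^ 2 + norm y ^ 2)"
proof -
  have "norm (x + y) ^ 2 \<le> (norm x + norm y) ^ 2"
    by (intro power_mono norm_triangle_ineq) simp
  also have "\<dots> \<le> 2 * (norm x ^ 2 + norm y ^ 2)"
    using zero_le_power2[of "norm x - norm y"] by (simp add: power2_eq_square algebra_simps)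
  finally show ?thesis .
qed

lemma sum_norm_sq_add_zero_sum:
  fixes x :: "'b::real_inner" and d :: "nat \<Rightarrow> 'b"
  assumes "(\<Sum>j\<in>J. d j) = 0"
  shows "(\<Sum>j\<in>J. norm (x + d j) ^ 2) = real (card J) * norm x ^ 2 + (\<Sum>j\<in>J. norm (d j) ^ 2)"
proof -
  have "(\<Sum>j\<in>J. norm (x + d j) ^ 2) = (\<Sum>j\<in>J. norm x ^ 2 + 2 * inner x (d j) + norm (d j) ^ 2)"
    by (intro sum.cong refl) (simp add: power2_norm_eq_inner inner_add_left inner_add_right inner_commute)
  also have "\<dots> = real (card J) * norm x ^ 2 + 2 * inner x (\<Sum>j\<in>J. d j) + (\<Sum>j\<in>J. norm (d j) ^ 2)"
    by (simp add: sum.distrib inner_sum_right sum_distrib_left)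
  finally show ?thesis using assms by simp
qed

text \<open>The cross terms of \<open>S\<close> with the \<open>D j\<close> cancel on average over \<open>j\<close>.\<close>
lemma exists_mean_square_add_le:
  fixes S :: "'a \<Rightarrow> 'b::{real_inner, second_countable_topology}" and D :: "nat \<Rightarrow> 'a \<Rightarrow> 'b"
  assumes m: "0 < m" and [measurable]: "S \<in> borel_measurable M" "\<And>j. D j \<in> borel_measurable M"
    and sum_zero: "AE \<omega> in M. (\<Sum>j<m. D j \<omega>) = 0"
    and D: "\<And>j. j < m \<Longrightarrow> mean_square M (D j) \<le> B"
  shows "\<exists>j<m. mean_square M (\<lambda>\<omega>. S \<omega> + D j \<omega>) \<le> mean_square M S + B"
proof -
  define E where "E j = mean_square M (\<lambda>\<omega>. S \<omega> + D j \<omega>)" for j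
  have "(\<Sum>j<m. E j) = (\<integral>\<^sup>+\<omega>. (\<Sum>j<m. ennreal (norm (S \<omega> + D j \<omega>) ^ 2)) \<partial>M)"
    unfolding E_def mean_square_def by (rule nn_integral_sum[symmetric]) measurable
  also have "\<dots> = (\<integral>\<^sup>+\<omega>. of_nat m * ennreal (norm (S \<omega>) ^ 2) + (\<Sum>j<m. ennreal (norm (D j \<omega>) ^ 2)) \<partial>M)"
  proof (rule nn_integral_cong_AE, use sum_zero in \<open>eventually_elim\<close>)
    fix \<omega> assume "(\<Sum>j<m. D j \<omega>) = 0"
    have "(\<Sum>j<m. ennreal (norm (S \<omega> + D j \<omega>) ^ 2)) = ennreal (\<Sum>j<m. norm (S \<omega> + D j \<omega>) ^ 2)"
      by (rule sum_ennreal) simp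
    also have "\<dots> = ennreal (real m * norm (S \<omega>) ^ 2 + (\<Sum>j<m. norm (D j \<omega>) ^ 2))"
      using sum_norm_sq_add_zero_sum[OF \<open>(\<Sum>j<m. D j \<omega>) = 0\<close>, of "S \<omega>"] by simp
    finally show "(\<Sum>j<m. ennreal (norm (S \<omega> + D j \<omega>) ^ 2))
        = of_nat m * ennreal (norm (S \<omega>) ^ 2) + (\<Sum>j<m. ennreal (norm (D j \<omega>) ^ 2))"
      by (simp add: ennreal_plus ennreal_mult ennreal_of_nat_eq_real_of_nat sum_nonneg sum_ennreal)
  qed
  also have "\<dots> = of_nat m * mean_square M S + (\<Sum>j<m. mean_square M (D j))"
    unfolding mean_square_def
    by (subst nn_integral_add, measurable, subst nn_integral_cmult, measurable, subst nn_integral_sum)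
      measurable
  also have "\<dots> \<le> of_nat m * mean_square M S + of_nat m * B"
  proof (intro add_mono order_refl)
    have "(\<Sum>j<m. mean_square M (D j)) \<le> (\<Sum>j<m. B)" by (rule sum_mono) (simp add: D)
    then show "(\<Sum>j<m. mean_square M (D j)) \<le> of_nat m * B" by simp
  qed
  finally have sum_le: "(\<Sum>j<m. E j) \<le> of_nat m * (mean_square M S + B)"
    by (simp add: distrib_left)
  have fin: "finite (E ` {..<m})" "E ` {..<m} \<noteq> {}" using m by auto
  obtain j0 where j0: "j0 < m" "E j0 = Min (E ` {..<m})" using Min_in[OF fin] by auto
  have "of_nat m * E j0 = (\<Sum>j<m. E j0)" by simp
  also have "\<dots> \<le> (\<Sum>j<m. E j)" by (intro sum_mono) (simp add: j0 fin)
  finally have "of_nat m * E j0 \<le> of_nat m * (mean_square M S + B)" using sum_le by simp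
  then have "E j0 \<le> mean_square M S + B"
    using m by (subst (asm) ennreal_mult_le_mult_iff) auto
  then show ?thesis using j0 by (auto simp: E_def)
qed

lemma norm_integral_scaleR_sq_le:
  fixes f :: "'c \<Rightarrow> 'b::{banach, second_countable_topology}"
  assumes [measurable]: "f \<in> borel_measurable N" "\<psi> \<in> borel_measurable N" "C \<in> sets N"
    and supp: "\<And>s. s \<notin> C \<Longrightarrow> \<psi> s = 0"
  shows "ennreal (norm (\<integral>s. \<psi> s *\<^sub>R f s \<partial>N) ^ 2)
     \<le> (\<integral>\<^sup>+ s. ennreal ((\<psi> s)\<^sup>2) \<partial>N) * (\<integral>\<^sup>+ s. indicator C s * ennreal (norm (f s) ^ 2) \<partial>N)"
proof (cases "integrable N (\<lambda>s. \<psi> s *\<^sub>R f s)")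
  case False
  then show ?thesis by (simp add: not_integrable_integral_eq)
next
  case True
  have "ennreal (norm (\<integral>s. \<psi> s *\<^sub>R f s \<partial>N) ^ 2) = ennreal (norm (\<integral>s. \<psi> s *\<^sub>R f s \<partial>N)) ^ 2"
    by (simp add: ennreal_power)
  also have "\<dots> \<le> (\<integral>\<^sup>+ s. ennreal (norm (\<psi> s *\<^sub>R f s)) \<partial>N) ^ 2"
    by (intro power_mono integral_norm_bound_ennreal True) simp
  also have "(\<integral>\<^sup>+ s. ennreal (norm (\<psi> s *\<^sub>R f s)) \<partial>N)
      = (\<integral>\<^sup>+ s. ennreal \<bar>\<psi> s\<bar> * ennreal (indicator C s * norm (f s)) \<partial>N)"
    by (intro nn_integral_cong) (auto simp: ennreal_mult[symmetric] supp indicator_def)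
  also have "(\<dots>) ^ 2 \<le> (\<integral>\<^sup>+ s. ennreal \<bar>\<psi> s\<bar> ^ 2 \<partial>N) * (\<integral>\<^sup>+ s. ennreal (indicator C s * norm (f s)) ^ 2 \<partial>N)"
    by (rule Cauchy_Schwarz_nn_integral) auto
  also have "\<dots> = (\<integral>\<^sup>+ s. ennreal ((\<psi> s)\<^sup>2) \<partial>N) * (\<integral>\<^sup>+ s. indicator C s * ennreal (norm (f s) ^ 2) \<partial>N)"
    by (intro arg_cong2[where f = "(*)"] nn_integral_cong) (auto simp: ennreal_power indicator_def)
  finally show ?thesis .
qed

lemma emeasure_subset_Icc_finite: "B \<subseteq> {a..b::real} \<Longrightarrow> emeasure lborel B \<noteq> \<infinity>"
  using emeasure_mono[of B "{a..b}" lborel] by (auto simp: top_unique emeasure_lborel_Icc_eq)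

lemma exists_disjoint_subset_with_measure:
  fixes A :: "real set"
  assumes A: "A \<in> sets borel" "A \<subseteq> {0..T}" and y: "0 \<le> y" "y \<le> T - measure lborel A"
  shows "\<exists>J. J \<in> sets borel \<and> J \<subseteq> {0..T} \<and> J \<inter> A = {} \<and> measure lborel J = y"
proof -
  define \<phi> where "\<phi> x = measure lborel ({0..x} - A)" for x
  have sets: "{0..x} - A \<in> sets borel" for x using A(1) by (intro sets.Diff) auto
  have Icc: "{a..b} \<in> fmeasurable lborel" for a b :: real
    by (intro fmeasurableI) (auto simp: emeasure_lborel_Icc_eq)
  have fin: "{0..x} - A \<in> fmeasurable lborel" for x
    by (rule fmeasurableI2[OF Icc]) (use sets in auto)
  have \<phi>_lipschitz: "\<phi> x \<le> \<phi> x' \<and> \<phi> x' \<le> \<phi> x + (x' - x)" if "x \<le> x'" for x x'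
  proof
    show "\<phi> x \<le> \<phi> x'" unfolding \<phi>_def
      by (rule measure_mono_fmeasurable[OF _ _ fin]) (use that sets in auto)
    have "\<phi> x' \<le> measure lborel (({0..x} - A) \<union> {x..x'})" unfolding \<phi>_def
      by (rule measure_mono_fmeasurable)
        (use sets fin Icc in \<open>auto intro: fmeasurable.Un\<close>)
    also have "\<dots> \<le> \<phi> x + measure lborel {x..x'}" unfolding \<phi>_def
      by (rule measure_Un_le) (use sets in auto)
    finally show "\<phi> x' \<le> \<phi> x + (x' - x)" using that by simp
  qed
  have "continuous_on {0..T} \<phi>"
  proof (rule lipschitz_on_continuous_on[OF lipschitz_onI])
    show "dist (\<phi> x) (\<phi> x') \<le> 1 * dist x x'" for x x'
      using \<phi>_lipschitz[of x x'] \<phi>_lipschitz[of x' x] by (cases "x \<le> x'") (auto simp: dist_real_def)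
  qed simp
  moreover have "\<phi> 0 = 0"
  proof -
    have "\<phi> 0 \<le> measure lborel {0..0::real}" unfolding \<phi>_def
      by (rule measure_mono_fmeasurable[OF _ _ Icc]) (use sets[of 0] in auto)
    then show ?thesis by (simp add: \<phi>_def antisym)
  qed
  moreover have T: "0 \<le> T" using y measure_nonneg[of lborel A] by linarith
  moreover have "y \<le> \<phi> T"
  proof -
    have "T \<le> measure lborel (({0..T} - A) \<union> A)"
      using T by (simp add: Un_absorb2 A)
    also have "\<dots> \<le> \<phi> T + measure lborel A" unfolding \<phi>_def
      by (rule measure_Un_le) (use sets A in auto)
    finally show ?thesis using y by simp
  qed
  ultimately obtain x where "0 \<le> x" "x \<le> T" "\<phi> x = y"
    using IVT'[of \<phi> 0 y T] y by (auto simp: measure_nonneg)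
  then show ?thesis using sets by (intro exI[of _ "{0..x} - A"]) (auto simp: \<phi>_def)
qed

lemma nn_integral_spike_weight_sq_le:
  assumes J: "J \<in> sets borel" "J \<subseteq> {0..T}" "measure lborel J = \<delta> * T"
    and \<delta>: "0 \<le> \<delta>" "\<delta> \<le> 1" and t: "t \<in> {0..T}"
  shows "(\<integral>\<^sup>+ s. ennreal ((indicator {0..t} s * (\<delta> - indicator J s))\<^sup>2) \<partial>lborel) \<le> ennreal (2 * \<delta> * T)"
proof -
  have T: "0 \<le> T" using t by simp
  have pointwise: "(indicator {0..t} s * (\<delta> - indicator J s))\<^sup>2 \<le> \<delta>\<^sup>2 * indicator {0..T} s + indicator J s" for s
  proof (cases "s \<in> J")
    case True
    have "(indicator {0..t} s * (\<delta> - indicator J s))\<^sup>2 \<le> (1::real)"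
      using \<delta> by (auto simp: indicator_def abs_square_le_1)
    moreover have "1 \<le> \<delta>\<^sup>2 * indicator {0..T} s + indicator J s" using True by simp
    ultimately show ?thesis by linarith
  next
    case False
    then show ?thesis using t by (auto simp: indicator_def power2_eq_square)
  qed
  have "(\<integral>\<^sup>+ s. ennreal ((indicator {0..t} s * (\<delta> - indicator J s))\<^sup>2) \<partial>lborel)
      \<le> (\<integral>\<^sup>+ s. ennreal (\<delta>\<^sup>2) * indicator {0..T} s + indicator J s \<partial>lborel)"
  proof (intro nn_integral_mono)
    fix s
    have "ennreal ((indicator {0..t} s * (\<delta> - indicator J s))\<^sup>2) \<le> ennreal (\<delta>\<^sup>2 * indicator {0..T} s + indicator J s)"
      by (rule ennreal_leI) (rule pointwise)
    then show "ennreal ((indicator {0..t} s * (\<delta> - indicator J s))\<^sup>2) \<le> ennreal (\<delta>\<^sup>2) * indicator {0..T} s + indicator J s"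
      by (simp add: ennreal_plus ennreal_mult ennreal_indicator)
  qed
  also have "\<dots> = ennreal (\<delta>\<^sup>2) * emeasure lborel {0..T} + emeasure lborel J"
    using J(1) by (subst nn_integral_add) (auto simp: nn_integral_cmult_indicator)
  also have "emeasure lborel J = ennreal (\<delta> * T)"
    using emeasure_subset_Icc_finite[OF J(2)] J(3) by (simp add: emeasure_eq_ennreal_measure)
  also have "ennreal (\<delta>\<^sup>2) * emeasure lborel {0..T} + ennreal (\<delta> * T) = ennreal (\<delta>\<^sup>2 * T + \<delta> * T)"
    using T \<delta> by (simp add: ennreal_mult ennreal_plus)
  also have "\<dots> \<le> ennreal (2 * \<delta> * T)"
  proof (intro ennreal_leI)
    have "\<delta>\<^sup>2 * T \<le> \<delta> * T"
      using \<delta> T unfolding power2_eq_square by (intro mult_right_mono mult_right_le_one_le) auto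
    then show "\<delta>\<^sup>2 * T + \<delta> * T \<le> 2 * \<delta> * T" by linarith
  qed
  finally show ?thesis .
qed

section \<open>Cyclically shifted selections of grid cells\<close>

lemma mod_add_left_cancel_less:
  fixes i j j' m :: nat
  assumes "j < m" "j' < m" "(i + j) mod m = (i + j') mod m"
  shows "j = j'"
proof -
  have "a = b" if "a \<le> b" "b < m" "(i + a) mod m = (i + b) mod m" for a b
  proof -
    have "m dvd (i + b) - (i + a)" using that mod_eq_dvd_iff_nat[of "i + a" "i + b" m] by simp
    then show ?thesis using that by (cases "a = b") (auto dest: dvd_imp_le)
  qed
  from this[of j j'] this[of j' j] show ?thesis using assms by (cases "j \<le> j'") auto
qed

lemma card_shift_mod_less:
  fixes i m q :: nat
  assumes "0 < m" "q \<le> m"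
  shows "card {j\<in>{..<m}. (i + j) mod m < q} = q"
proof -
  define g where "g j = (i + j) mod m" for j
  have inj: "inj_on g {..<m}"
    by (rule inj_onI) (auto simp: g_def intro: mod_add_left_cancel_less)
  have "g ` {..<m} = {..<m}"
    using inj assms(1) by (intro endo_inj_surj) (auto simp: g_def)
  then have "g ` {j\<in>{..<m}. g j < q} = {..<q}"
    using assms(2) by auto
  moreover have "card (g ` {j\<in>{..<m}. g j < q}) = card {j\<in>{..<m}. g j < q}"
    by (rule card_image, rule inj_on_subset[OF inj]) auto
  ultimately show ?thesis by (simp add: g_def)
qed

text \<open>Index \<open>p\<close> is a cell of the grid, lying in block \<open>p div m\<close> at position \<open>p mod m\<close>; in block
  \<open>k\<close>, shift \<open>j\<close> selects the \<open>q\<close> cells whose cyclically shifted position is below \<open>q\<close>.\<close>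
definition shifted_block :: "nat \<Rightarrow> nat \<Rightarrow> nat \<Rightarrow> nat \<Rightarrow> nat set" where
  "shifted_block m q k j = {p. p div m = k \<and> (p mod m + j) mod m < q}"

definition spike_indices :: "nat \<Rightarrow> nat \<Rightarrow> (nat \<Rightarrow> nat) \<Rightarrow> nat \<Rightarrow> nat set" where
  "spike_indices m q c n = (\<Union>k<n. shifted_block m q k (c k))"

lemma finite_shifted_block:
  assumes "0 < m"
  shows "finite (shifted_block m q k j)"
proof (rule finite_subset)
  show "shifted_block m q k j \<subseteq> {..<Suc k * m}"
  proof
    fix p assume "p \<in> shifted_block m q k j"
    then have "p div m < Suc k" by (simp add: shifted_block_def)
    then show "p \<in> {..<Suc k * m}" using div_less_iff_less_mult[OF assms] by simp
  qed
qed simp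

lemma card_shifted_block:
  assumes "0 < m" "q \<le> m"
  shows "card (shifted_block m q k j) = q"
proof -
  have "shifted_block m q k j = (\<lambda>i. k * m + i) ` {i\<in>{..<m}. (i + j) mod m < q}"
  proof (intro set_eqI iffI)
    fix p assume "p \<in> shifted_block m q k j"
    then show "p \<in> (\<lambda>i. k * m + i) ` {i\<in>{..<m}. (i + j) mod m < q}"
      using div_mult_mod_eq[of p m] mod_less_divisor[OF assms(1), of p]
      by (intro image_eqI[of _ _ "p mod m"]) (auto simp: shifted_block_def)
  qed (use assms(1) in \<open>auto simp: shifted_block_def\<close>)
  moreover have "card {i\<in>{..<m}. (i + j) mod m < q} = q"
    using card_shift_mod_less[OF assms, of j] by (simp add: add.commute)
  ultimately show ?thesis by (simp add: card_image inj_on_def)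
qed

lemma card_spike_indices:
  assumes "0 < m" "q \<le> m"
  shows "card (spike_indices m q c n) = n * q"
proof -
  have "card (spike_indices m q c n) = (\<Sum>k<n. card (shifted_block m q k (c k)))"
    unfolding spike_indices_def
  proof (rule card_UN_disjoint)
    show "\<forall>k\<in>{..<n}. finite (shifted_block m q k (c k))"
      by (simp add: finite_shifted_block assms(1))
  qed (auto simp: shifted_block_def)
  then show ?thesis by (simp add: card_shifted_block[OF assms])
qed

lemma spike_indices_Suc:
  "spike_indices m q c (Suc n) = spike_indices m q c n \<union> shifted_block m q n (c n)"
  by (simp add: spike_indices_def lessThan_Suc Un_commute)

lemma spike_indices_fun_upd:
  "n \<le> k \<Longrightarrow> spike_indices m q (c(k := j)) n = spike_indices m q c n"
  by (simp add: spike_indices_def)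

lemma spike_indices_Int_div_less:
  "n \<le> n' \<Longrightarrow> spike_indices m q c n' \<inter> {p. p div m < n} = spike_indices m q c n"
  by (auto simp: spike_indices_def shifted_block_def)

lemma sum_indicator_shifted_block:
  assumes "0 < m" "q \<le> m"
  shows "(\<Sum>j<m. indicator (shifted_block m q k j) p :: real) = real q * indicator {p. p div m = k} p"
proof (cases "p div m = k")
  case True
  have "(\<Sum>j<m. indicator (shifted_block m q k j) p :: real)
      = real (card {j\<in>{..<m}. (p mod m + j) mod m < q})"
    using True by (simp add: shifted_block_def indicator_def sum.If_cases Int_def)
  then show ?thesis using True card_shift_mod_less[OF assms] by simp
qed (simp add: shifted_block_def)

definition grid_set :: "real \<Rightarrow> nat set \<Rightarrow> real set" where
  "grid_set w Q = {s. 0 \<le> s \<and> nat \<lfloor>s / w\<rfloor> \<in> Q}"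

lemma indicator_grid_set: "indicator (grid_set w Q) s = (if 0 \<le> s then indicator Q (nat \<lfloor>s / w\<rfloor>) else 0)"
  by (simp add: indicator_def grid_set_def)

lemma sets_grid_set [measurable]: "grid_set w Q \<in> sets borel"
proof -
  have "(\<lambda>s::real. nat \<lfloor>s / w\<rfloor>) \<in> measurable borel (count_space UNIV)" by measurable
  then show ?thesis unfolding grid_set_def by measurable
qed

lemma grid_set_atLeastLessThan:
  assumes "0 < w"
  shows "grid_set w {a..<b} = {real a * w..<real b * w}"
proof -
  have "a \<le> nat \<lfloor>s / w\<rfloor> \<longleftrightarrow> real a * w \<le> s" "nat \<lfloor>s / w\<rfloor> < b \<longleftrightarrow> s < real b * w" if "0 \<le> s" for s
    using that assms by (auto simp: le_nat_iff nat_less_iff le_floor_iff floor_less_iff le_divide_eq divide_less_eq)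
  moreover have "real a * w \<le> s \<Longrightarrow> 0 \<le> s" for s
    using assms by (meson mult_nonneg_nonneg of_nat_0_le_iff less_imp_le order_trans)
  ultimately show ?thesis by (auto simp: grid_set_def)
qed

lemma emeasure_grid_set:
  assumes "0 < w" "finite Q"
  shows "emeasure lborel (grid_set w Q) = ennreal (real (card Q) * w)"
  using assms(2)
proof (induction Q rule: finite_induct)
  case (insert p Q)
  have "grid_set w (insert p Q) = grid_set w {p..<Suc p} \<union> grid_set w Q"
    by (auto simp: grid_set_def)
  moreover have "grid_set w {p..<Suc p} \<inter> grid_set w Q = {}"
    using insert.hyps(2) by (auto simp: grid_set_def)
  ultimately have "emeasure lborel (grid_set w (insert p Q))
      = emeasure lborel (grid_set w {p..<Suc p}) + emeasure lborel (grid_set w Q)"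
    by (metis plus_emeasure sets_grid_set sets_lborel)
  also have "\<dots> = ennreal w + ennreal (real (card Q) * w)"
    unfolding insert.IH grid_set_atLeastLessThan[OF assms(1)] using assms(1)
    by (simp add: algebra_simps)
  also have "\<dots> = ennreal (real (card (insert p Q)) * w)"
    using insert.hyps assms(1) by (subst ennreal_plus[symmetric]) (auto simp: algebra_simps)
  finally show ?case .
qed (simp add: grid_set_def)

lemma grid_set_div_less:
  assumes "0 < w" "0 < m"
  shows "grid_set w {p. p div m < n} = {0..<real n * (real m * w)}"
proof -
  have "{p. p div m < n} = {0..<n * m}" using assms(2) by (auto simp: div_less_iff_less_mult)
  then show ?thesis using assms(1) by (simp add: grid_set_atLeastLessThan mult.assoc)
qed

lemma grid_set_div_eq:
  assumes "0 < w" "0 < m"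
  shows "grid_set w {p. p div m = k} = {real k * (real m * w)..<real (Suc k) * (real m * w)}"
proof -
  have "{p. p div m = k} = {k * m..<Suc k * m}"
  proof (intro set_eqI)
    fix p
    have "k \<le> p div m \<longleftrightarrow> k * m \<le> p" "p div m < Suc k \<longleftrightarrow> p < Suc k * m"
      using assms(2) by (simp_all add: less_eq_div_iff_mult_less_eq div_less_iff_less_mult)
    then show "p \<in> {p. p div m = k} \<longleftrightarrow> p \<in> {k * m..<Suc k * m}" by auto
  qed
  moreover have "real (a * m) * w = real a * (real m * w)" for a by simp
  ultimately show ?thesis using grid_set_atLeastLessThan[OF assms(1)] by presburger
qed

lemma grid_set_spike_indices_subset:
  assumes "0 < w" "0 < m"
  shows "grid_set w (spike_indices m q c n) \<subseteq> {0..<real n * (real m * w)}"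
proof -
  have "grid_set w (spike_indices m q c n) \<subseteq> grid_set w {p. p div m < n}"
    by (auto simp: grid_set_def spike_indices_def shifted_block_def)
  then show ?thesis using grid_set_div_less[OF assms] by simp
qed

lemma measure_grid_set_spike_indices:
  assumes w: "0 < w" and m: "0 < m" and q: "q \<le> m"
  shows "measure lborel (grid_set w (spike_indices m q c n)) = real (n * q) * w"
proof -
  have "spike_indices m q c n \<subseteq> {..<n * m}"
    using div_less_iff_less_mult[OF m] by (auto simp: spike_indices_def shifted_block_def)
  then have "finite (spike_indices m q c n)" by (rule finite_subset) simp
  then have "emeasure lborel (grid_set w (spike_indices m q c n)) = ennreal (real (n * q) * w)"
    using emeasure_grid_set[OF w] card_spike_indices[OF m q] by simp
  then show ?thesis using w by (simp add: measure_def)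
qed

lemma exists_block_index:
  assumes "0 < h" "0 < m" "0 \<le> t" "t \<le> real m * h"
  shows "\<exists>n<m. real n * h \<le> t \<and> t \<le> real (Suc n) * h"
proof (cases "t < real m * h")
  case True
  define n where "n = nat \<lfloor>t / h\<rfloor>"
  have "real n = of_int \<lfloor>t / h\<rfloor>" using assms(1,3) by (simp add: n_def)
  then have "real n \<le> t / h" "t / h < real n + 1" using floor_correct[of "t / h"] by linarith+
  then have "real n * h \<le> t" "t < real (Suc n) * h"
    using assms(1) by (simp_all add: le_divide_eq divide_less_eq algebra_simps)
  moreover from this(1) True have "n < m"
    using assms(1) by (metis mult_less_cancel_right_pos order.strict_trans1 of_nat_less_iff)
  ultimately show ?thesis by (intro exI[of _ n]) auto
next
  case False
  then have "t = real (Suc (m - 1)) * h" using assms by simp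
  moreover have "real (m - 1) * h \<le> real m * h" using assms(1) by simp
  ultimately show ?thesis using assms(2) by (intro exI[of _ "m - 1"]) auto
qed

lemma proportion_bounds:
  assumes "q \<le> m"
  shows "0 \<le> real q / real m" "real q / real m \<le> 1"
  using assms by (auto simp: divide_le_eq_1)

lemma abs_indicator_weight_le:
  fixes \<rho> :: real
  assumes "0 \<le> \<rho>" "\<rho> \<le> 1"
  shows "\<bar>indicator A s * (\<rho> - indicator B s)\<bar> \<le> 1"
  using assms by (auto simp: indicator_def abs_if)

lemma abs_weight_le:
  assumes "q \<le> m" "B \<subseteq> A"
  shows "\<bar>real q / real m * indicator A s - indicator B s\<bar> \<le> 1"
  using proportion_bounds[OF assms(1)] assms(2) by (cases "s \<in> A"; cases "s \<in> B") auto

text \<open>Integrated against the process, \<open>prefix_weight w m q c n\<close> gives the spike error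
  accumulated over the first \<open>n\<close> blocks, and \<open>block_weight w m q n j\<close> the error added by
  block \<open>n\<close> under shift \<open>j\<close>.\<close>
definition prefix_weight :: "real \<Rightarrow> nat \<Rightarrow> nat \<Rightarrow> (nat \<Rightarrow> nat) \<Rightarrow> nat \<Rightarrow> real \<Rightarrow> real" where
  "prefix_weight w m q c n s = real q / real m * indicator (grid_set w {p. p div m < n}) s
     - indicator (grid_set w (spike_indices m q c n)) s"

definition block_weight :: "real \<Rightarrow> nat \<Rightarrow> nat \<Rightarrow> nat \<Rightarrow> nat \<Rightarrow> real \<Rightarrow> real" where
  "block_weight w m q n j s = real q / real m * indicator (grid_set w {p. p div m = n}) s
     - indicator (grid_set w (shifted_block m q n j)) s"

lemma measurable_prefix_weight [measurable]: "prefix_weight w m q c n \<in> borel_measurable borel"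
  unfolding prefix_weight_def by measurable

lemma measurable_block_weight [measurable]: "block_weight w m q n j \<in> borel_measurable borel"
  unfolding block_weight_def by measurable

lemma prefix_weight_0: "prefix_weight w m q c 0 s = 0"
  by (simp add: prefix_weight_def spike_indices_def grid_set_def)

lemma prefix_weight_fun_upd: "k \<le> n \<Longrightarrow> prefix_weight w m q (c(n := j)) k = prefix_weight w m q c k"
  by (simp add: prefix_weight_def spike_indices_fun_upd fun_eq_iff)

lemma prefix_weight_Suc:
  "prefix_weight w m q (c(n := j)) (Suc n) s = prefix_weight w m q c n s + block_weight w m q n j s"
proof -
  have "grid_set w {p. p div m < Suc n} = grid_set w {p. p div m < n} \<union> grid_set w {p. p div m = n}"
    "grid_set w {p. p div m < n} \<inter> grid_set w {p. p div m = n} = {}"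
    by (auto simp: grid_set_def)
  moreover have "grid_set w (spike_indices m q (c(n := j)) (Suc n))
      = grid_set w (spike_indices m q c n) \<union> grid_set w (shifted_block m q n j)"
    "grid_set w (spike_indices m q c n) \<inter> grid_set w (shifted_block m q n j) = {}"
    by (auto simp: spike_indices_Suc spike_indices_fun_upd grid_set_def spike_indices_def shifted_block_def)
  ultimately show ?thesis
    by (simp add: prefix_weight_def block_weight_def indicator_disj_union algebra_simps)
qed

lemma sum_block_weight:
  assumes "0 < m" "q \<le> m"
  shows "(\<Sum>j<m. block_weight w m q n j s) = 0"
  using sum_indicator_shifted_block[OF assms, of n "nat \<lfloor>s / w\<rfloor>"] assms(1)
  by (simp add: block_weight_def sum_subtractf indicator_grid_set)

lemma abs_prefix_weight_le: "q \<le> m \<Longrightarrow> \<bar>prefix_weight w m q c n s\<bar> \<le> 1"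
  unfolding prefix_weight_def
  by (rule abs_weight_le) (auto simp: grid_set_def spike_indices_def shifted_block_def)

lemma abs_block_weight_le: "q \<le> m \<Longrightarrow> \<bar>block_weight w m q n j s\<bar> \<le> 1"
  unfolding block_weight_def
  by (rule abs_weight_le) (auto simp: grid_set_def shifted_block_def)

lemma block_weight_outside: "s \<notin> grid_set w {p. p div m = n} \<Longrightarrow> block_weight w m q n j s = 0"
  by (auto simp: block_weight_def grid_set_def shifted_block_def indicator_def)

section \<open>Processes with uniformly bounded second moment\<close>

locale L2_bounded_process =
  fixes M :: "'a measure" and T :: real and F :: "real \<Rightarrow> 'a \<Rightarrow> 'b::euclidean_space" and K :: real
  assumes prob_space_M: "prob_space M" and T_pos: "0 < T" and K_nonneg: "0 \<le> K"
    and measurable_F [measurable]: "(\<lambda>x. F (snd x) (fst x)) \<in> borel_measurable (M \<Otimes>\<^sub>M lborel)"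
    and F_outside: "\<And>s \<omega>. s \<notin> {0..T} \<Longrightarrow> F s \<omega> = 0"
    and mean_square_F: "\<And>s. s \<in> {0..T} \<Longrightarrow> mean_square M (F s) \<le> ennreal K"
begin

interpretation pair_sigma_finite M lborel
  using prob_space_M
  by (simp add: pair_sigma_finite_def prob_space_imp_sigma_finite lborel.sigma_finite_measure_axioms)

definition weighted_integral :: "(real \<Rightarrow> real) \<Rightarrow> 'a \<Rightarrow> 'b" where
  "weighted_integral \<psi> \<omega> = (\<integral>s. \<psi> s *\<^sub>R F s \<omega> \<partial>lborel)"

lemma measurable_weighted_integral [measurable]:
  assumes [measurable]: "\<psi> \<in> borel_measurable lborel"
  shows "weighted_integral \<psi> \<in> borel_measurable M"
proof -
  have "(\<lambda>x. \<psi> (snd x) *\<^sub>R F (snd x) (fst x)) \<in> borel_measurable (M \<Otimes>\<^sub>M lborel)"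
    by measurable
  then show ?thesis unfolding weighted_integral_def
    by (intro lborel.borel_measurable_lebesgue_integral) (simp add: case_prod_beta')
qed

lemma nn_integral_indicator_norm_sq_le:
  assumes [measurable]: "C \<in> sets borel" and "C \<subseteq> {0..T}"
  shows "(\<integral>\<^sup>+\<omega>. \<integral>\<^sup>+s. indicator C s * ennreal (norm (F s \<omega>) ^ 2) \<partial>lborel \<partial>M) \<le> emeasure lborel C * ennreal K"
proof -
  have "(\<lambda>x. indicator C (snd x) * ennreal (norm (F (snd x) (fst x)) ^ 2)) \<in> borel_measurable (M \<Otimes>\<^sub>M lborel)"
    by measurable
  from Fubini[OF this]
  have "(\<integral>\<^sup>+\<omega>. \<integral>\<^sup>+s. indicator C s * ennreal (norm (F s \<omega>) ^ 2) \<partial>lborel \<partial>M)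
      = (\<integral>\<^sup>+s. \<integral>\<^sup>+\<omega>. indicator C s * ennreal (norm (F s \<omega>) ^ 2) \<partial>M \<partial>lborel)"
    by simp
  also have "\<dots> = (\<integral>\<^sup>+s. indicator C s * mean_square M (F s) \<partial>lborel)"
    unfolding mean_square_def using measurable_Pair1[OF measurable_F]
    by (intro nn_integral_cong nn_integral_cmult) auto
  also have "\<dots> \<le> (\<integral>\<^sup>+s. ennreal K * indicator C s \<partial>lborel)"
    using assms(2) mean_square_F by (intro nn_integral_mono) (auto simp: indicator_def)
  also have "\<dots> = ennreal K * emeasure lborel C"
    by (rule nn_integral_cmult_indicator) (use assms(1) in simp)
  finally show ?thesis by (simp add: mult.commute)
qed

lemma AE_integrable_path: "AE \<omega> in M. integrable lborel (\<lambda>s. F s \<omega>)"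
proof -
  have "(\<integral>\<^sup>+\<omega>. \<integral>\<^sup>+s. indicator {0..T} s * ennreal (norm (F s \<omega>) ^ 2) \<partial>lborel \<partial>M)
      \<le> emeasure lborel {0..T} * ennreal K"
    by (rule nn_integral_indicator_norm_sq_le) auto
  also have "\<dots> < \<infinity>" using T_pos by (simp add: ennreal_mult_less_top)
  finally have "AE \<omega> in M. (\<integral>\<^sup>+s. indicator {0..T} s * ennreal (norm (F s \<omega>) ^ 2) \<partial>lborel) \<noteq> \<infinity>"
    by (intro nn_integral_PInf_AE) auto
  then show ?thesis
  proof (rule AE_mp, intro AE_I2 impI)
    fix \<omega> assume \<omega>: "\<omega> \<in> space M"
      and fin: "(\<integral>\<^sup>+s. indicator {0..T} s * ennreal (norm (F s \<omega>) ^ 2) \<partial>lborel) \<noteq> \<infinity>"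
    have [measurable]: "(\<lambda>s. F s \<omega>) \<in> borel_measurable lborel"
      using measurable_Pair2[OF measurable_F \<omega>] by simp
    have "(\<integral>\<^sup>+s. ennreal (norm (F s \<omega>)) \<partial>lborel)
        \<le> (\<integral>\<^sup>+s. indicator {0..T} s + indicator {0..T} s * ennreal (norm (F s \<omega>) ^ 2) \<partial>lborel)"
    proof (intro nn_integral_mono)
      fix s
      have "0 \<le> (norm (F s \<omega>) - 1)\<^sup>2" by simp
      then have "2 * norm (F s \<omega>) \<le> 1 + norm (F s \<omega>) ^ 2"
        by (simp add: power2_eq_square algebra_simps)
      then have "norm (F s \<omega>) \<le> 1 + norm (F s \<omega>) ^ 2"
        using norm_ge_zero[of "F s \<omega>"] by linarith
      then show "ennreal (norm (F s \<omega>)) \<le> indicator {0..T} s + indicator {0..T} s * ennreal (norm (F s \<omega>) ^ 2)"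
      proof (cases "s \<in> {0..T}")
        case True
        have "ennreal (norm (F s \<omega>)) \<le> ennreal (1 + norm (F s \<omega>) ^ 2)"
          by (rule ennreal_leI) fact
        then show ?thesis using True by (simp add: ennreal_plus)
      qed (simp add: F_outside)
    qed
    also have "\<dots> = emeasure lborel {0..T} + (\<integral>\<^sup>+s. indicator {0..T} s * ennreal (norm (F s \<omega>) ^ 2) \<partial>lborel)"
      by (subst nn_integral_add) auto
    also have "\<dots> < \<infinity>" using fin T_pos by (simp add: less_top emeasure_lborel_Icc_eq)
    finally show "integrable lborel (\<lambda>s. F s \<omega>)"
      by (intro integrableI_bounded) auto
  qed
qed

lemma integrable_weighted:
  assumes "integrable lborel (\<lambda>s. F s \<omega>)" "\<psi> \<in> borel_measurable lborel" "\<And>s. \<bar>\<psi> s\<bar> \<le> c"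
  shows "integrable lborel (\<lambda>s. \<psi> s *\<^sub>R F s \<omega>)"
proof (rule Bochner_Integration.integrable_bound[of _ "\<lambda>s. c *\<^sub>R F s \<omega>"])
  show "integrable lborel (\<lambda>s. c *\<^sub>R F s \<omega>)" using assms(1) by simp
  show "(\<lambda>s. \<psi> s *\<^sub>R F s \<omega>) \<in> borel_measurable lborel"
    using assms(1,2) by (intro borel_measurable_scaleR) (auto dest: borel_measurable_integrable)
  show "AE s in lborel. norm (\<psi> s *\<^sub>R F s \<omega>) \<le> norm (c *\<^sub>R F s \<omega>)"
    using assms(3) abs_ge_zero[of "\<psi> 0"] order_trans[OF _ assms(3)]
    by (intro AE_I2) (simp add: mult_right_mono)
qed

lemma weighted_integral_sum:
  assumes "integrable lborel (\<lambda>s. F s \<omega>)"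
    and "\<And>j. j \<in> J \<Longrightarrow> \<psi> j \<in> borel_measurable lborel" "\<And>j s. j \<in> J \<Longrightarrow> \<bar>\<psi> j s\<bar> \<le> c"
  shows "weighted_integral (\<lambda>s. \<Sum>j\<in>J. \<psi> j s) \<omega> = (\<Sum>j\<in>J. weighted_integral (\<psi> j) \<omega>)"
  unfolding weighted_integral_def scaleR_sum_left
proof (rule Bochner_Integration.integral_sum)
  fix j assume "j \<in> J"
  then show "integrable lborel (\<lambda>s. \<psi> j s *\<^sub>R F s \<omega>)"
    using assms by (intro integrable_weighted) auto
qed

lemma weighted_integral_add:
  assumes "integrable lborel (\<lambda>s. F s \<omega>)"
    and "\<psi>\<^sub>1 \<in> borel_measurable lborel" "\<psi>\<^sub>2 \<in> borel_measurable lborel"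
    and "\<And>s. \<bar>\<psi>\<^sub>1 s\<bar> \<le> c" "\<And>s. \<bar>\<psi>\<^sub>2 s\<bar> \<le> c"
  shows "weighted_integral (\<lambda>s. \<psi>\<^sub>1 s + \<psi>\<^sub>2 s) \<omega> = weighted_integral \<psi>\<^sub>1 \<omega> + weighted_integral \<psi>\<^sub>2 \<omega>"
  unfolding weighted_integral_def scaleR_add_left
  using integrable_weighted[OF assms(1) assms(2,4)] integrable_weighted[OF assms(1) assms(3,5)]
  by (rule Bochner_Integration.integral_add)

lemma mean_square_weighted_integral_le:
  assumes [measurable]: "\<psi> \<in> borel_measurable lborel" "C \<in> sets borel"
    and "C \<subseteq> {0..T}" and supp: "\<And>s. s \<notin> C \<Longrightarrow> \<psi> s = 0"
  shows "mean_square M (weighted_integral \<psi>)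
    \<le> (\<integral>\<^sup>+ s. ennreal ((\<psi> s)\<^sup>2) \<partial>lborel) * (emeasure lborel C * ennreal K)"
proof -
  have "mean_square M (weighted_integral \<psi>)
     \<le> (\<integral>\<^sup>+\<omega>. (\<integral>\<^sup>+ s. ennreal ((\<psi> s)\<^sup>2) \<partial>lborel) *
          (\<integral>\<^sup>+ s. indicator C s * ennreal (norm (F s \<omega>) ^ 2) \<partial>lborel) \<partial>M)"
    unfolding mean_square_def weighted_integral_def
    using measurable_Pair2[OF measurable_F]
    by (intro nn_integral_mono norm_integral_scaleR_sq_le) (auto intro: supp)
  also have "\<dots> = (\<integral>\<^sup>+ s. ennreal ((\<psi> s)\<^sup>2) \<partial>lborel) *
      (\<integral>\<^sup>+\<omega>. (\<integral>\<^sup>+ s. indicator C s * ennreal (norm (F s \<omega>) ^ 2) \<partial>lborel) \<partial>M)"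
  proof (rule nn_integral_cmult)
    have "(\<lambda>x. indicator C (snd x) * ennreal (norm (F (snd x) (fst x)) ^ 2)) \<in> borel_measurable (M \<Otimes>\<^sub>M lborel)"
      by measurable
    then show "(\<lambda>\<omega>. \<integral>\<^sup>+ s. indicator C s * ennreal (norm (F s \<omega>) ^ 2) \<partial>lborel) \<in> borel_measurable M"
      by (intro lborel.borel_measurable_nn_integral) (simp add: case_prod_beta')
  qed
  also have "\<dots> \<le> (\<integral>\<^sup>+ s. ennreal ((\<psi> s)\<^sup>2) \<partial>lborel) * (emeasure lborel C * ennreal K)"
    by (intro mult_left_mono nn_integral_indicator_norm_sq_le assms) simp
  finally show ?thesis .
qed

lemma mean_square_weighted_integral_le_measure:
  assumes [measurable]: "\<psi> \<in> borel_measurable lborel" "C \<in> sets borel"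
    and C: "C \<subseteq> {0..T}" and supp: "\<And>s. s \<notin> C \<Longrightarrow> \<psi> s = 0" and bound: "\<And>s. \<bar>\<psi> s\<bar> \<le> 1"
  shows "mean_square M (weighted_integral \<psi>) \<le> ennreal (measure lborel C ^ 2 * K)"
proof -
  have fin: "emeasure lborel C = ennreal (measure lborel C)"
    using emeasure_subset_Icc_finite[OF C] by (simp add: emeasure_eq_ennreal_measure)
  have "(\<integral>\<^sup>+ s. ennreal ((\<psi> s)\<^sup>2) \<partial>lborel) \<le> (\<integral>\<^sup>+ s. indicator C s \<partial>lborel)"
    using supp bound by (intro nn_integral_mono) (auto simp: indicator_def abs_square_le_1)
  then have \<psi>: "(\<integral>\<^sup>+ s. ennreal ((\<psi> s)\<^sup>2) \<partial>lborel) \<le> ennreal (measure lborel C)"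
    by (simp add: fin)
  have "mean_square M (weighted_integral \<psi>)
      \<le> (\<integral>\<^sup>+ s. ennreal ((\<psi> s)\<^sup>2) \<partial>lborel) * (emeasure lborel C * ennreal K)"
    by (rule mean_square_weighted_integral_le[OF assms(1-4)])
  also have "\<dots> \<le> ennreal (measure lborel C) * (ennreal (measure lborel C) * ennreal K)"
    unfolding fin by (intro mult_right_mono \<psi>) simp
  also have "\<dots> = ennreal (measure lborel C ^ 2 * K)"
    using K_nonneg by (simp add: ennreal_mult power2_eq_square mult.assoc)
  finally show ?thesis .
qed

lemma mean_square_weighted_integral_add_le:
  assumes [measurable]: "\<psi>\<^sub>1 \<in> borel_measurable lborel" "\<psi>\<^sub>2 \<in> borel_measurable lborel"
    and "\<And>s. \<bar>\<psi>\<^sub>1 s\<bar> \<le> c" "\<And>s. \<bar>\<psi>\<^sub>2 s\<bar> \<le> c"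
  shows "mean_square M (weighted_integral (\<lambda>s. \<psi>\<^sub>1 s + \<psi>\<^sub>2 s))
    \<le> 2 * (mean_square M (weighted_integral \<psi>\<^sub>1) + mean_square M (weighted_integral \<psi>\<^sub>2))"
proof -
  have "mean_square M (weighted_integral (\<lambda>s. \<psi>\<^sub>1 s + \<psi>\<^sub>2 s))
      \<le> (\<integral>\<^sup>+\<omega>. 2 * (ennreal (norm (weighted_integral \<psi>\<^sub>1 \<omega>) ^ 2)
          + ennreal (norm (weighted_integral \<psi>\<^sub>2 \<omega>) ^ 2)) \<partial>M)"
    unfolding mean_square_def
  proof (rule nn_integral_mono_AE, use AE_integrable_path in \<open>eventually_elim\<close>)
    fix \<omega> assume "integrable lborel (\<lambda>s. F s \<omega>)"
    have "norm (weighted_integral (\<lambda>s. \<psi>\<^sub>1 s + \<psi>\<^sub>2 s) \<omega>) ^ 2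
        \<le> 2 * (norm (weighted_integral \<psi>\<^sub>1 \<omega>) ^ 2 + norm (weighted_integral \<psi>\<^sub>2 \<omega>) ^ 2)"
      unfolding weighted_integral_add[OF \<open>integrable lborel (\<lambda>s. F s \<omega>)\<close> assms] by (rule norm_add_sq_le)
    then have "ennreal (norm (weighted_integral (\<lambda>s. \<psi>\<^sub>1 s + \<psi>\<^sub>2 s) \<omega>) ^ 2)
        \<le> ennreal (2 * (norm (weighted_integral \<psi>\<^sub>1 \<omega>) ^ 2 + norm (weighted_integral \<psi>\<^sub>2 \<omega>) ^ 2))"
      by (rule ennreal_leI)
    then show "ennreal (norm (weighted_integral (\<lambda>s. \<psi>\<^sub>1 s + \<psi>\<^sub>2 s) \<omega>) ^ 2)
        \<le> 2 * (ennreal (norm (weighted_integral \<psi>\<^sub>1 \<omega>) ^ 2) + ennreal (norm (weighted_integral \<psi>\<^sub>2 \<omega>) ^ 2))"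
      by (simp add: ennreal_mult ennreal_plus)
  qed
  also have "\<dots> = 2 * (mean_square M (weighted_integral \<psi>\<^sub>1) + mean_square M (weighted_integral \<psi>\<^sub>2))"
    unfolding mean_square_def by (subst nn_integral_cmult) (auto simp: nn_integral_add)
  finally show ?thesis .
qed

lemma mean_square_block_weight_le:
  assumes m: "0 < m" and q: "q \<le> m" and "n < m"
  defines "w \<equiv> T / (real m * real m)"
  shows "mean_square M (weighted_integral (block_weight w m q n j)) \<le> ennreal ((T / real m)\<^sup>2 * K)"
proof -
  define h where "h = T / real m"
  have h: "0 < h" and mh: "real m * h = T" using m T_pos by (auto simp: h_def)
  have cell: "grid_set w {p. p div m = n} = {real n * h..<real (Suc n) * h}"
    using grid_set_div_eq[of w m n] m T_pos by (simp add: w_def h_def)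
  have "real (Suc n) * h \<le> T" using \<open>n < m\<close> h mh by (metis Suc_leI mult_right_mono of_nat_le_iff less_imp_le)
  moreover have "0 \<le> real n * h" using h by simp
  ultimately have "grid_set w {p. p div m = n} \<subseteq> {0..T}" by (auto simp: cell)
  then have "mean_square M (weighted_integral (block_weight w m q n j))
      \<le> ennreal (measure lborel (grid_set w {p. p div m = n}) ^ 2 * K)"
    by (intro mean_square_weighted_integral_le_measure block_weight_outside abs_block_weight_le[OF q]) auto
  moreover have "measure lborel (grid_set w {p. p div m = n}) = h"
    using h by (simp add: cell algebra_simps)
  ultimately show ?thesis by (simp add: h_def)
qed

lemma AE_sum_block_weight_eq_0:
  assumes m: "0 < m" and q: "q \<le> m"
  shows "AE \<omega> in M. (\<Sum>j<m. weighted_integral (block_weight w m q n j) \<omega>) = 0"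
  using AE_integrable_path
proof eventually_elim
  case (elim \<omega>)
  have "(\<Sum>j<m. weighted_integral (block_weight w m q n j) \<omega>)
      = weighted_integral (\<lambda>s. \<Sum>j<m. block_weight w m q n j s) \<omega>"
    using abs_block_weight_le[OF q] by (intro weighted_integral_sum[symmetric] elim) auto
  then show ?case by (simp add: sum_block_weight[OF m q] weighted_integral_def)
qed

lemma AE_weighted_integral_prefix_weight_Suc:
  assumes q: "q \<le> m"
  shows "AE \<omega> in M. weighted_integral (prefix_weight w m q (c(n := j)) (Suc n)) \<omega>
    = weighted_integral (prefix_weight w m q c n) \<omega> + weighted_integral (block_weight w m q n j) \<omega>"
  using AE_integrable_path
proof eventually_elim
  case (elim \<omega>)
  show ?case unfolding prefix_weight_Suc
    by (rule weighted_integral_add[OF elim _ _ abs_prefix_weight_le[OF q] abs_block_weight_le[OF q]]) auto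
qed

lemma exists_shifts_mean_square_prefix_weight_le:
  assumes m: "0 < m" and q: "q \<le> m"
  defines "w \<equiv> T / (real m * real m)"
  shows "\<exists>c. \<forall>n\<le>m. mean_square M (weighted_integral (prefix_weight w m q c n))
    \<le> ennreal (real n * (T / real m)\<^sup>2 * K)"
proof -
  define B where "B = (T / real m)\<^sup>2 * K"
  have "\<exists>c. \<forall>k\<le>n. mean_square M (weighted_integral (prefix_weight w m q c k)) \<le> ennreal (real k * B)"
    if "n \<le> m" for n
    using that
  proof (induction n)
    case 0
    then show ?case by (simp add: prefix_weight_0 weighted_integral_def mean_square_def)
  next
    case (Suc n)
    then obtain c where c: "\<And>k. k \<le> n \<Longrightarrow>
        mean_square M (weighted_integral (prefix_weight w m q c k)) \<le> ennreal (real k * B)"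
      by auto
    obtain j where j: "mean_square M (\<lambda>\<omega>. weighted_integral (prefix_weight w m q c n) \<omega>
        + weighted_integral (block_weight w m q n j) \<omega>)
        \<le> mean_square M (weighted_integral (prefix_weight w m q c n)) + ennreal B"
      using exists_mean_square_add_le[OF m _ _ AE_sum_block_weight_eq_0[OF m q, of w n]
          mean_square_block_weight_le[OF m q Suc_le_lessD[OF Suc.prems], folded w_def B_def],
          of "weighted_integral (prefix_weight w m q c n)"] by auto
    have "mean_square M (weighted_integral (prefix_weight w m q (c(n := j)) (Suc n)))
        = mean_square M (\<lambda>\<omega>. weighted_integral (prefix_weight w m q c n) \<omega>
          + weighted_integral (block_weight w m q n j) \<omega>)"
      by (rule mean_square_cong_AE[OF AE_weighted_integral_prefix_weight_Suc[OF q]])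
    also have "\<dots> \<le> ennreal (real n * B) + ennreal B"
      using j c[of n] by (auto intro: order_trans add_right_mono)
    also have "\<dots> = ennreal (real (Suc n) * B)"
      using K_nonneg by (simp add: B_def ennreal_plus[symmetric] algebra_simps del: ennreal_plus)
    finally have "mean_square M (weighted_integral (prefix_weight w m q (c(n := j)) (Suc n)))
        \<le> ennreal (real (Suc n) * B)" .
    moreover have "mean_square M (weighted_integral (prefix_weight w m q (c(n := j)) k))
        \<le> ennreal (real k * B)" if "k \<le> n" for k
      using c[OF that] by (simp only: prefix_weight_fun_upd[OF that])
    ultimately show ?case by (intro exI[of _ "c(n := j)"]) (auto simp only: le_Suc_eq)
  qed
  then show ?thesis by (simp add: B_def mult.assoc)
qed

lemma mean_square_partial_block_le:
  assumes [measurable]: "I \<in> sets borel" and "0 \<le> a" "a \<le> t" "t \<le> T" "t - a \<le> h"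
    and "0 \<le> \<rho>" "\<rho> \<le> 1"
  shows "mean_square M (weighted_integral (\<lambda>s. (indicator {0..t} s - indicator {0..<a} s) * (\<rho> - indicator I s)))
    \<le> ennreal (h\<^sup>2 * K)"
proof -
  have "\<bar>(indicator {0..t} s - indicator {0..<a} s) * (\<rho> - indicator I s)\<bar> \<le> (1::real)" for s
    using assms(6,7) by (auto simp: indicator_def abs_mult)
  then have "mean_square M (weighted_integral (\<lambda>s. (indicator {0..t} s - indicator {0..<a} s) * (\<rho> - indicator I s)))
      \<le> ennreal (measure lborel {a..t} ^ 2 * K)"
    using assms by (intro mean_square_weighted_integral_le_measure) (auto simp: indicator_def)
  also have "\<dots> \<le> ennreal (h\<^sup>2 * K)"
    using assms K_nonneg by (intro ennreal_leI mult_right_mono power_mono) auto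
  finally show ?thesis .
qed

text \<open>At the block boundary below \<open>t\<close> the error is a prefix error; the incomplete block adds
  at most \<open>(T/m)\<^sup>2 K\<close>.\<close>
lemma mean_square_grid_spike_le:
  assumes m: "0 < m" and q: "q \<le> m" and t: "t \<in> {0..T}"
  defines "w \<equiv> T / (real m * real m)"
  assumes c: "\<And>n. n \<le> m \<Longrightarrow>
      mean_square M (weighted_integral (prefix_weight w m q c n)) \<le> ennreal (real n * (T / real m)\<^sup>2 * K)"
  shows "mean_square M (weighted_integral
      (\<lambda>s. indicator {0..t} s * (real q / real m - indicator (grid_set w (spike_indices m q c m)) s)))
    \<le> ennreal (2 * T\<^sup>2 * K / real m)"
proof -
  define h where "h = T / real m"
  define I where "I = grid_set w (spike_indices m q c m)"
  define r where "r n s = (indicator {0..t} s - indicator {0..<real n * h} s) * (real q / real m - indicator I s)"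
    for n s
  have w: "0 < w" and h: "0 < h" and hw: "real m * w = h" and mh: "real m * h = T"
    using m T_pos by (auto simp: w_def h_def)
  obtain n where "n < m" and n: "real n * h \<le> t" "t \<le> real (Suc n) * h"
    using exists_block_index[OF h m] t mh by auto
  have prefix: "grid_set w {p. p div m < n} = {0..<real n * h}"
    using grid_set_div_less[OF w m] hw by simp
  have "grid_set w (spike_indices m q c n) = {0..<real n * h} \<inter> I"
    using spike_indices_Int_div_less[of n m m q c] \<open>n < m\<close> prefix by (auto simp: I_def grid_set_def)
  then have eq: "(\<lambda>s. indicator {0..t} s * (real q / real m - indicator I s))
      = (\<lambda>s. prefix_weight w m q c n s + r n s)"
    by (simp add: prefix_weight_def r_def prefix indicator_inter_arith algebra_simps)
  have r_bound: "\<bar>r n s\<bar> \<le> 1" for s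
  proof -
    have "\<bar>indicator {0..t} s - indicator {0..<real n * h} s\<bar> \<le> (1::real)" by (simp add: indicator_def)
    moreover have "\<bar>real q / real m - indicator I s\<bar> \<le> 1"
      using abs_indicator_weight_le[OF proportion_bounds[OF q], of UNIV s I] by simp
    ultimately show ?thesis by (simp add: r_def abs_mult mult_le_one)
  qed
  have [measurable]: "r n \<in> borel_measurable lborel" unfolding r_def I_def by measurable
  have "mean_square M (weighted_integral (\<lambda>s. indicator {0..t} s * (real q / real m - indicator I s)))
      \<le> 2 * (mean_square M (weighted_integral (prefix_weight w m q c n)) + mean_square M (weighted_integral (r n)))"
    unfolding eq by (rule mean_square_weighted_integral_add_le[OF _ _ abs_prefix_weight_le[OF q] r_bound]; measurable)
  also have "\<dots> \<le> 2 * (ennreal (real n * h\<^sup>2 * K) + ennreal (h\<^sup>2 * K))"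
    unfolding r_def I_def using \<open>n < m\<close> n t h proportion_bounds[OF q]
    by (intro mult_left_mono add_mono c[unfolded h_def[symmetric]] mean_square_partial_block_le)
      (auto simp: algebra_simps)
  also have "\<dots> = 2 * ennreal (real (Suc n) * h\<^sup>2 * K)"
    using K_nonneg by (simp add: ennreal_plus[symmetric] algebra_simps del: ennreal_plus)
  also have "\<dots> \<le> 2 * ennreal (real m * h\<^sup>2 * K)"
    using \<open>n < m\<close> K_nonneg by (intro mult_left_mono ennreal_leI mult_right_mono) auto
  also have "\<dots> = ennreal (2 * T\<^sup>2 * K / real m)"
    using m K_nonneg by (subst numeral_mult_ennreal) (auto simp: h_def power2_eq_square)
  finally show ?thesis by (simp add: I_def)
qed

lemma exists_grid_spike_set:
  assumes m: "0 < m" and q: "q \<le> m"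
  shows "\<exists>I. I \<in> sets borel \<and> I \<subseteq> {0..T} \<and> measure lborel I = real q / real m * T \<and>
    (\<forall>t\<in>{0..T}. mean_square M (weighted_integral (\<lambda>s. indicator {0..t} s * (real q / real m - indicator I s)))
       \<le> ennreal (2 * T\<^sup>2 * K / real m))"
proof -
  define w where "w = T / (real m * real m)"
  have w: "0 < w" and mw: "real m * (real m * w) = T" using m T_pos by (auto simp: w_def)
  obtain c where c: "\<And>n. n \<le> m \<Longrightarrow>
      mean_square M (weighted_integral (prefix_weight w m q c n)) \<le> ennreal (real n * (T / real m)\<^sup>2 * K)"
    using exists_shifts_mean_square_prefix_weight_le[OF m q] by (auto simp: w_def)
  have "measure lborel (grid_set w (spike_indices m q c m)) = real q / real m * T"
    using measure_grid_set_spike_indices[OF w m q, of c m] m by (simp add: w_def field_simps)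
  with grid_set_spike_indices_subset[OF w m, of q c m]
    mean_square_grid_spike_le[OF m q _ c[unfolded w_def], folded w_def]
  show ?thesis by (intro exI[of _ "grid_set w (spike_indices m q c m)"]) (auto simp: mw)
qed

lemma mean_square_spike_error_le:
  assumes J: "J \<in> sets borel" "J \<subseteq> {0..T}" "measure lborel J = \<delta> * T"
    and \<delta>: "0 \<le> \<delta>" "\<delta> \<le> 1" and t: "t \<in> {0..T}"
  shows "mean_square M (weighted_integral (\<lambda>s. indicator {0..t} s * (\<delta> - indicator J s)))
    \<le> ennreal (2 * \<delta> * T\<^sup>2 * K)"
proof -
  have "mean_square M (weighted_integral (\<lambda>s. indicator {0..t} s * (\<delta> - indicator J s)))
      \<le> (\<integral>\<^sup>+ s. ennreal ((indicator {0..t} s * (\<delta> - indicator J s))\<^sup>2) \<partial>lborel) * (emeasure lborel {0..T} * ennreal K)"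
    using t J(1) by (intro mean_square_weighted_integral_le) auto
  also have "\<dots> \<le> ennreal (2 * \<delta> * T) * (ennreal T * ennreal K)"
    using T_pos nn_integral_spike_weight_sq_le[OF assms] by (simp add: emeasure_lborel_Icc_eq mult_right_mono)
  also have "\<dots> = ennreal (2 * \<delta> * T\<^sup>2 * K)"
    using T_pos K_nonneg \<delta> by (simp add: ennreal_mult power2_eq_square mult.assoc)
  finally show ?thesis .
qed

lemma mean_square_spike_union_le:
  assumes [measurable]: "I \<in> sets borel" and J: "J \<in> sets borel" "J \<subseteq> {0..T}" "I \<inter> J = {}"
    "measure lborel J = \<delta> * T" and \<delta>: "0 \<le> \<delta>" "\<delta> \<le> 1" and \<rho>: "0 \<le> \<rho>" "\<rho> \<le> 1" and t: "t \<in> {0..T}"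
    and I: "mean_square M (weighted_integral (\<lambda>s. indicator {0..t} s * (\<rho> - indicator I s))) \<le> B"
  shows "mean_square M (weighted_integral (\<lambda>s. indicator {0..t} s * (\<rho> + \<delta> - indicator (I \<union> J) s)))
    \<le> 2 * (B + ennreal (2 * \<delta> * T\<^sup>2 * K))"
proof -
  have "indicator {0..t} s * (\<rho> + \<delta> - indicator (I \<union> J) s)
      = indicator {0..t} s * (\<rho> - indicator I s) + indicator {0..t} s * (\<delta> - indicator J s)" for s
    using J(3) by (auto simp: indicator_def algebra_simps)
  then have "mean_square M (weighted_integral (\<lambda>s. indicator {0..t} s * (\<rho> + \<delta> - indicator (I \<union> J) s)))
      \<le> 2 * (mean_square M (weighted_integral (\<lambda>s. indicator {0..t} s * (\<rho> - indicator I s)))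
        + mean_square M (weighted_integral (\<lambda>s. indicator {0..t} s * (\<delta> - indicator J s))))"
    using J(1) abs_indicator_weight_le[OF \<rho>] abs_indicator_weight_le[OF \<delta>]
    by (simp only:, intro mean_square_weighted_integral_add_le) auto
  also have "\<dots> \<le> 2 * (B + ennreal (2 * \<delta> * T\<^sup>2 * K))"
    by (intro mult_left_mono add_mono I mean_square_spike_error_le J t \<delta>) simp_all
  finally show ?thesis .
qed

text \<open>A grid spike set of proportion \<open>\<lfloor>\<rho> m\<rfloor> / m\<close>, topped up by an arbitrary set of the
  missing measure \<open>< T / m\<close>.\<close>
lemma exists_spike_set:
  assumes \<rho>: "0 < \<rho>" "\<rho> < 1" and \<eta>: "0 < \<eta>"
  shows "\<exists>I. I \<in> sets borel \<and> I \<subseteq> {0..T} \<and> measure lborel I = \<rho> * T \<and>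
    (\<forall>t\<in>{0..T}. mean_square M (weighted_integral (\<lambda>s. indicator {0..t} s * (\<rho> - indicator I s)))
      \<le> ennreal \<eta>)"
proof -
  obtain m :: nat where m_large: "8 * T\<^sup>2 * K / \<eta> < real m" using reals_Archimedean2 by blast
  moreover have "0 \<le> 8 * T\<^sup>2 * K / \<eta>" using K_nonneg \<eta> by simp
  ultimately have m: "0 < m" by linarith
  define q where "q = nat \<lfloor>\<rho> * real m\<rfloor>"
  define \<delta> where "\<delta> = \<rho> - real q / real m"
  have q_floor: "real q \<le> \<rho> * real m" "\<rho> * real m < real q + 1"
    using \<rho> by (simp_all add: q_def)
  moreover have "\<rho> * real m < real m" using \<rho> m by simp
  ultimately have q: "q \<le> m" by linarith
  have "\<delta> = (\<rho> * real m - real q) / real m" using m by (simp add: \<delta>_def field_simps)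
  then have \<delta>: "0 \<le> \<delta>" "\<delta> \<le> 1 / real m" using q_floor m by (simp_all add: divide_right_mono)
  then have \<delta>_le_1: "\<delta> \<le> 1" using m by (simp add: divide_le_eq_1 order_trans)
  obtain I' where I': "I' \<in> sets borel" "I' \<subseteq> {0..T}" "measure lborel I' = real q / real m * T"
    and I'_bound: "\<And>t. t \<in> {0..T} \<Longrightarrow> mean_square M (weighted_integral (\<lambda>s. indicator {0..t} s
        * (real q / real m - indicator I' s))) \<le> ennreal (2 * T\<^sup>2 * K / real m)"
    using exists_grid_spike_set[OF m q] by blast
  have "0 \<le> \<delta> * T" using \<delta>(1) T_pos by simp
  moreover have "\<delta> * T \<le> T - measure lborel I'"
    using \<rho> T_pos by (simp add: I'(3) \<delta>_def algebra_simps)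
  ultimately obtain J where J: "J \<in> sets borel" "J \<subseteq> {0..T}" "J \<inter> I' = {}" "measure lborel J = \<delta> * T"
    using exists_disjoint_subset_with_measure[OF I'(1,2)] by blast
  have "measure lborel (I' \<union> J) = \<rho> * T"
    using I' J emeasure_subset_Icc_finite[OF I'(2)] emeasure_subset_Icc_finite[OF J(2)]
    by (subst measure_Union) (auto simp: \<delta>_def algebra_simps)
  moreover have "mean_square M (weighted_integral (\<lambda>s. indicator {0..t} s * (\<rho> - indicator (I' \<union> J) s)))
      \<le> ennreal \<eta>" if t: "t \<in> {0..T}" for t
  proof -
    have "mean_square M (weighted_integral (\<lambda>s. indicator {0..t} s * (\<rho> - indicator (I' \<union> J) s)))
        \<le> 2 * (ennreal (2 * T\<^sup>2 * K / real m) + ennreal (2 * \<delta> * T\<^sup>2 * K))"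
      using mean_square_spike_union_le[OF I'(1) J(1,2) _ J(4) \<delta>(1) \<delta>_le_1 proportion_bounds[OF q] t
          I'_bound[OF t]] J(3) by (simp add: \<delta>_def Int_commute)
    also have "\<dots> \<le> 2 * (ennreal (2 * T\<^sup>2 * K / real m) + ennreal (2 * T\<^sup>2 * K / real m))"
      using \<delta>(2) m T_pos K_nonneg
      by (intro mult_left_mono add_mono ennreal_leI) (auto simp: field_simps mult_left_mono)
    also have "\<dots> = ennreal (8 * T\<^sup>2 * K / real m)"
      using m T_pos K_nonneg by (simp add: ennreal_plus[symmetric] numeral_mult_ennreal del: ennreal_plus)
    also have "\<dots> \<le> ennreal \<eta>"
      using m_large m \<eta> by (intro ennreal_leI) (simp add: divide_less_eq mult.commute less_imp_le)
    finally show ?thesis .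
  qed
  ultimately show ?thesis using I' J by (intro exI[of _ "I' \<union> J"]) auto
qed

lemma set_integral_spike_eq:
  assumes "integrable lborel (\<lambda>s. F s \<omega>)" and [measurable]: "I \<in> sets borel"
  shows "\<rho> *\<^sub>R (LINT s:{0..t}|lborel. F s \<omega>) - (LINT s:(I \<inter> {0..t})|lborel. F s \<omega>)
    = weighted_integral (\<lambda>s. indicator {0..t} s * (\<rho> - indicator I s)) \<omega>"
proof -
  have "\<rho> *\<^sub>R (LINT s:{0..t}|lborel. F s \<omega>) = weighted_integral (\<lambda>s. \<rho> * indicator {0..t} s) \<omega>"
    by (simp add: set_lebesgue_integral_def weighted_integral_def flip: integral_scaleR_right)
  moreover have "- (LINT s:(I \<inter> {0..t})|lborel. F s \<omega>) = weighted_integral (\<lambda>s. - indicator (I \<inter> {0..t}) s) \<omega>"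
    by (simp add: set_lebesgue_integral_def weighted_integral_def)
  moreover have "weighted_integral (\<lambda>s. \<rho> * indicator {0..t} s + - indicator (I \<inter> {0..t}) s) \<omega>
      = weighted_integral (\<lambda>s. \<rho> * indicator {0..t} s) \<omega> + weighted_integral (\<lambda>s. - indicator (I \<inter> {0..t}) s) \<omega>"
    by (rule weighted_integral_add[OF assms(1), where c = "\<bar>\<rho>\<bar> + 1"]) (auto simp: indicator_def)
  moreover have "(\<lambda>s. \<rho> * indicator {0..t} s + - indicator (I \<inter> {0..t}) s)
      = (\<lambda>s. indicator {0..t} s * (\<rho> - indicator I s))"
    by (auto simp: indicator_def)
  ultimately show ?thesis by simp
qed

text \<open>Precision \<open>\<rho>\<^sup>5\<close> for each \<open>\<rho>\<close> makes the bound \<open>o(\<rho>\<^sup>4)\<close>.\<close>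
lemma exists_spike_family:
  "\<exists>I :: real \<Rightarrow> real set.
    (\<forall>\<rho>\<in>{0<..<1}. I \<rho> \<in> sets borel \<and> I \<rho> \<subseteq> {0..T} \<and> measure lborel (I \<rho>) = \<rho> * T) \<and>
    (\<forall>\<epsilon>>0. \<exists>\<delta>>0. \<forall>\<rho>\<in>{0<..<1}. \<rho> < \<delta> \<longrightarrow> (\<forall>t\<in>{0..T}.
       (\<integral>\<^sup>+ \<omega>. ennreal ((norm (\<rho> *\<^sub>R (LINT s:{0..t}|lborel. F s \<omega>)
                 - (LINT s:(I \<rho> \<inter> {0..t})|lborel. F s \<omega>))) ^ 2) \<partial>M)
       \<le> ennreal (\<epsilon> * \<rho> ^ 4)))"
proof -
  have "\<forall>\<rho>\<in>{0<..<1}. \<exists>I. I \<in> sets borel \<and> I \<subseteq> {0..T} \<and> measure lborel I = \<rho> * T \<and>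
      (\<forall>t\<in>{0..T}. mean_square M (weighted_integral (\<lambda>s. indicator {0..t} s * (\<rho> - indicator I s)))
        \<le> ennreal (\<rho> ^ 5))"
    by (intro ballI exists_spike_set) auto
  from bchoice[OF this] obtain I where I: "\<forall>\<rho>\<in>{0<..<1}. I \<rho> \<in> sets borel \<and> I \<rho> \<subseteq> {0..T} \<and> measure lborel (I \<rho>) = \<rho> * T \<and>
      (\<forall>t\<in>{0..T}. mean_square M (weighted_integral (\<lambda>s. indicator {0..t} s * (\<rho> - indicator (I \<rho>) s)))
        \<le> ennreal (\<rho> ^ 5))" ..
  have bound: "(\<integral>\<^sup>+ \<omega>. ennreal ((norm (\<rho> *\<^sub>R (LINT s:{0..t}|lborel. F s \<omega>)
      - (LINT s:(I \<rho> \<inter> {0..t})|lborel. F s \<omega>))) ^ 2) \<partial>M) \<le> ennreal (\<epsilon> * \<rho> ^ 4)"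
    if \<rho>: "\<rho> \<in> {0<..<1}" "\<rho> < \<epsilon>" and t: "t \<in> {0..T}" for \<rho> \<epsilon> t
  proof -
    have "(\<integral>\<^sup>+ \<omega>. ennreal ((norm (\<rho> *\<^sub>R (LINT s:{0..t}|lborel. F s \<omega>)
        - (LINT s:(I \<rho> \<inter> {0..t})|lborel. F s \<omega>))) ^ 2) \<partial>M)
        = mean_square M (weighted_integral (\<lambda>s. indicator {0..t} s * (\<rho> - indicator (I \<rho>) s)))"
      unfolding mean_square_def[symmetric] using AE_integrable_path
    proof (intro mean_square_cong_AE, eventually_elim)
      case (elim \<omega>)
      show ?case using I \<rho>(1) by (intro set_integral_spike_eq elim) auto
    qed
    also have "\<dots> \<le> ennreal (\<rho> ^ 5)" using I \<rho>(1) t by auto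
    also have "\<rho> ^ 5 = \<rho> * \<rho> ^ 4" by (simp add: eval_nat_numeral)
    also have "\<dots> \<le> ennreal (\<epsilon> * \<rho> ^ 4)" using \<rho> by (intro ennreal_leI mult_right_mono) auto
    finally show ?thesis .
  qed
  show ?thesis
  proof (intro exI[of _ I] conjI allI impI)
    show "\<forall>\<rho>\<in>{0<..<1}. I \<rho> \<in> sets borel \<and> I \<rho> \<subseteq> {0..T} \<and> measure lborel (I \<rho>) = \<rho> * T"
      using I by blast
    fix \<epsilon> :: real assume "0 < \<epsilon>"
    then show "\<exists>\<delta>>0. \<forall>\<rho>\<in>{0<..<1}. \<rho> < \<delta> \<longrightarrow> (\<forall>t\<in>{0..T}.
       (\<integral>\<^sup>+ \<omega>. ennreal ((norm (\<rho> *\<^sub>R (LINT s:{0..t}|lborel. F s \<omega>)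
                 - (LINT s:(I \<rho> \<inter> {0..t})|lborel. F s \<omega>))) ^ 2) \<partial>M)
       \<le> ennreal (\<epsilon> * \<rho> ^ 4))"
      by (intro exI[of _ \<epsilon>] conjI ballI impI bound)
  qed
qed

end

section \<open>The drift perturbation\<close>

lemma W2_self:
  fixes \<mu> :: "('b::{real_normed_vector, second_countable_topology}) measure"
  assumes "\<mu> \<in> P2"
  shows "W2 \<mu> \<mu> = 0"
proof -
  have sets: "sets \<mu> = sets borel" and ps: "prob_space \<mu>" using assms by (auto simp: P2_def)
  define \<pi> where "\<pi> = distr \<mu> borel (\<lambda>x. (x, x))"
  have diag[measurable]: "(\<lambda>x. (x, x)) \<in> measurable \<mu> borel"
    using sets by (simp add: measurable_cong_sets[OF sets refl] borel_measurable_continuous_onI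
        continuous_on_Pair continuous_on_id)
  have marginal: "distr \<pi> borel f = \<mu>" if "f \<in> {fst, snd}" for f
  proof -
    have "distr \<pi> borel f = distr \<mu> borel (f \<circ> (\<lambda>x. (x, x)))"
      unfolding \<pi>_def using that
      by (intro distr_distr) (auto intro!: borel_measurable_continuous_onI continuous_intros)
    also have "\<dots> = \<mu>" using that by (auto simp: comp_def distr_id2 sets)
    finally show ?thesis .
  qed
  have "\<pi> \<in> couplings \<mu> \<mu>"
    using marginal prob_space.prob_space_distr[OF ps diag] by (simp add: couplings_def \<pi>_def)
  moreover have "(\<integral>\<^sup>+ p. ennreal (norm (fst p - snd p) ^ 2) \<partial>\<pi>) = 0"
    unfolding \<pi>_def
    by (subst nn_integral_distr) (auto intro!: borel_measurable_continuous_onI continuous_intros)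
  ultimately have "(INF \<pi>\<in>couplings \<mu> \<mu>. \<integral>\<^sup>+ p. ennreal (norm (fst p - snd p) ^ 2) \<partial>\<pi>) = 0"
    by (metis (no_types, lifting) INF_lower bot.extremum_uniqueI bot_ennreal)
  then show ?thesis by (simp add: W2_def)
qed

lemma law_in_P2:
  fixes Y :: "'a \<Rightarrow> 'b::{real_normed_vector, second_countable_topology}"
  assumes "prob_space M" "Y \<in> borel_measurable M"
    and "(\<integral>\<^sup>+ \<omega>. ennreal (norm (Y \<omega>) ^ 2) \<partial>M) \<le> ennreal C"
  shows "law M Y \<in> P2"
proof -
  have "(\<integral>\<^sup>+ x. ennreal (norm x ^ 2) \<partial>distr M borel Y) = (\<integral>\<^sup>+ \<omega>. ennreal (norm (Y \<omega>) ^ 2) \<partial>M)"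
    using assms(2) by (subst nn_integral_distr) auto
  also have "\<dots> < \<infinity>" using assms(3) by (simp add: le_less_trans)
  finally show ?thesis
    using prob_space.prob_space_distr[OF assms(1,2)] by (simp add: P2_def law_def)
qed

lemma norm_Delta_b_le:
  fixes X :: "real \<Rightarrow> 'a \<Rightarrow> 'n::{real_normed_vector, second_countable_topology}"
  assumes lip: "\<forall>x x' \<mu> \<mu>' w w'. \<mu> \<in> P2 \<longrightarrow> \<mu>' \<in> P2 \<longrightarrow>
      norm (b t x \<mu> w - b t x' \<mu>' w') \<le> L * (norm (x - x') + W2 \<mu> \<mu>' + norm (w - w'))"
    and law: "law M (X t) \<in> P2"
  shows "norm (Delta_b M b X u v t \<omega>) \<le> L * norm (v t \<omega> - u t \<omega>)"
  using lip[rule_format, OF law law, where x = "X t \<omega>" and x' = "X t \<omega>"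
      and w = "v t \<omega>" and w' = "u t \<omega>"] W2_self[OF law]
  by (simp add: Delta_b_def)

lemma ex_nonneg_ennreal_bound:
  assumes "\<exists>C::real. \<forall>t\<in>A. f t \<le> ennreal C"
  shows "\<exists>C\<ge>0. \<forall>t\<in>A. f t \<le> ennreal C"
proof -
  obtain C where "\<forall>t\<in>A. f t \<le> ennreal C" using assms ..
  moreover have "ennreal C \<le> ennreal (max C 0)" by (rule ennreal_leI) simp
  ultimately show ?thesis by (intro exI[of _ "max C 0"]) (auto intro: order_trans)
qed

lemma mean_square_le_eighth_moments:
  fixes f :: "'a \<Rightarrow> 'b::real_normed_vector" and u v :: "'a \<Rightarrow> 'c::real_normed_vector"
  assumes "prob_space M" and [measurable]: "u \<in> borel_measurable M" "v \<in> borel_measurable M"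
    and f: "\<And>\<omega>. norm (f \<omega>) \<le> L * norm (v \<omega> - u \<omega>)" and "0 \<le> L"
    and u: "(\<integral>\<^sup>+\<omega>. ennreal (norm (u \<omega>) ^ 8) \<partial>M) \<le> ennreal Cu"
    and v: "(\<integral>\<^sup>+\<omega>. ennreal (norm (v \<omega>) ^ 8) \<partial>M) \<le> ennreal Cv"
    and "0 \<le> Cu" "0 \<le> Cv"
  shows "mean_square M f \<le> ennreal (2 * L\<^sup>2 * (2 + Cu + Cv))"
proof -
  interpret prob_space M by fact
  have sq_le: "x\<^sup>2 \<le> 1 + x ^ 8" if "0 \<le> x" for x :: real
  proof (cases "x \<le> 1")
    case True
    then show ?thesis using that power_le_one[of x 2] zero_le_power[of x 8] by linarith
  next
    case False
    then show ?thesis using power_increasing[of 2 8 x] by linarith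
  qed
  have pointwise: "norm (f \<omega>) ^ 2 \<le> 2 * L\<^sup>2 * (2 + norm (u \<omega>) ^ 8 + norm (v \<omega>) ^ 8)" for \<omega>
  proof -
    have "norm (f \<omega>) ^ 2 \<le> (L * norm (v \<omega> - u \<omega>)) ^ 2"
      by (intro power_mono f) simp
    also have "\<dots> = L\<^sup>2 * norm (v \<omega> + (- u \<omega>)) ^ 2" by (simp add: power_mult_distrib)
    also have "\<dots> \<le> L\<^sup>2 * (2 * (norm (v \<omega>) ^ 2 + norm (u \<omega>) ^ 2))"
      by (intro mult_left_mono) (simp_all add: norm_add_sq_le[of "v \<omega>" "- u \<omega>", simplified])
    also have "\<dots> \<le> L\<^sup>2 * (2 * (2 + norm (u \<omega>) ^ 8 + norm (v \<omega>) ^ 8))"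
      using sq_le[of "norm (u \<omega>)"] sq_le[of "norm (v \<omega>)"] by (intro mult_left_mono) auto
    finally show ?thesis by (simp add: algebra_simps)
  qed
  have "mean_square M f \<le> (\<integral>\<^sup>+\<omega>. ennreal (2 * L\<^sup>2) *
      (2 + ennreal (norm (u \<omega>) ^ 8) + ennreal (norm (v \<omega>) ^ 8)) \<partial>M)"
    unfolding mean_square_def
  proof (intro nn_integral_mono)
    fix \<omega>
    have "ennreal (norm (f \<omega>) ^ 2) \<le> ennreal (2 * L\<^sup>2 * (2 + norm (u \<omega>) ^ 8 + norm (v \<omega>) ^ 8))"
      using pointwise by (rule ennreal_leI)
    then show "ennreal (norm (f \<omega>) ^ 2)
        \<le> ennreal (2 * L\<^sup>2) * (2 + ennreal (norm (u \<omega>) ^ 8) + ennreal (norm (v \<omega>) ^ 8))"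
      by (simp add: ennreal_mult ennreal_plus)
  qed
  also have "\<dots> = ennreal (2 * L\<^sup>2) * (2 + (\<integral>\<^sup>+\<omega>. ennreal (norm (u \<omega>) ^ 8) \<partial>M)
      + (\<integral>\<^sup>+\<omega>. ennreal (norm (v \<omega>) ^ 8) \<partial>M))"
    by (subst nn_integral_cmult) (auto simp: nn_integral_add emeasure_space_1)
  also have "\<dots> \<le> ennreal (2 * L\<^sup>2) * (2 + ennreal Cu + ennreal Cv)"
    using u v by (intro mult_left_mono add_mono) auto
  also have "\<dots> = ennreal (2 * L\<^sup>2 * (2 + Cu + Cv))"
    using assms(8,9) by (simp add: ennreal_mult ennreal_plus)
  finally show ?thesis .
qed

lemma mean_square_Delta_b_le:
  fixes X :: "real \<Rightarrow> 'a \<Rightarrow> 'n::{real_normed_vector, second_countable_topology}"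
    and u v :: "real \<Rightarrow> 'a \<Rightarrow> 'k::real_normed_vector"
  assumes "prob_space M"
    and lip: "\<forall>x x' \<mu> \<mu>' w w'. \<mu> \<in> P2 \<longrightarrow> \<mu>' \<in> P2 \<longrightarrow>
      norm (b t x \<mu> w - b t x' \<mu>' w') \<le> L * (norm (x - x') + W2 \<mu> \<mu>' + norm (w - w'))"
    and "law M (X t) \<in> P2" "u t \<in> borel_measurable M" "v t \<in> borel_measurable M"
    and "(\<integral>\<^sup>+\<omega>. ennreal (norm (u t \<omega>) ^ 8) \<partial>M) \<le> ennreal Cu"
    and "(\<integral>\<^sup>+\<omega>. ennreal (norm (v t \<omega>) ^ 8) \<partial>M) \<le> ennreal Cv"
    and "0 \<le> Cu" "0 \<le> Cv"
  shows "mean_square M (Delta_b M b X u v t) \<le> ennreal (2 * (max L 0)\<^sup>2 * (2 + Cu + Cv))"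
proof (rule mean_square_le_eighth_moments[OF assms(1,4,5) _ _ assms(6-9)])
  show "norm (Delta_b M b X u v t \<omega>) \<le> max L 0 * norm (v t \<omega> - u t \<omega>)" for \<omega>
    using norm_Delta_b_le[where b = b and t = t and X = X and M = M, OF lip assms(3)]
    by (rule order_trans) (simp add: mult_right_mono)
qed simp

lemma measurable_indicator_extension:
  fixes f :: "real \<times> 'a \<Rightarrow> 'b::{real_normed_vector, second_countable_topology}"
  assumes f: "f \<in> borel_measurable (restrict_space lborel {a..b} \<Otimes>\<^sub>M M)" and "a \<le> b"
  shows "(\<lambda>x. indicator {a..b} (snd x) *\<^sub>R f (snd x, fst x)) \<in> borel_measurable (M \<Otimes>\<^sub>M lborel)"
proof -
  define clamp where "clamp s = max a (min b s)" for s
  have "(\<lambda>x. clamp (snd x)) \<in> measurable (M \<Otimes>\<^sub>M lborel) (restrict_space lborel {a..b})"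
    using \<open>a \<le> b\<close> by (intro measurable_restrict_space2) (auto simp: clamp_def measurable_lborel2)
  then have "(\<lambda>x. (clamp (snd x), fst x)) \<in> measurable (M \<Otimes>\<^sub>M lborel) (restrict_space lborel {a..b} \<Otimes>\<^sub>M M)"
    by measurable
  from measurable_compose[OF this f]
  have [measurable]: "(\<lambda>x. f (clamp (snd x), fst x)) \<in> borel_measurable (M \<Otimes>\<^sub>M lborel)" .
  have "(\<lambda>x. indicator {a..b} (snd x) *\<^sub>R f (snd x, fst x))
      = (\<lambda>x. indicator {a..b} (snd x) *\<^sub>R f (clamp (snd x), fst x))"
    by (rule ext, rename_tac x, case_tac "snd x \<in> {a..b}") (auto simp: clamp_def)
  then show ?thesis by simp
qed

lemma L2_bounded_process_Delta_b:
  fixes M :: "'a measure" and b :: "real \<Rightarrow> 'n::euclidean_space \<Rightarrow> 'n measure \<Rightarrow> 'k::real_normed_vector \<Rightarrow> 'n"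
    and X :: "real \<Rightarrow> 'a \<Rightarrow> 'n" and u v :: "real \<Rightarrow> 'a \<Rightarrow> 'k"
  assumes T_pos: "0 < T" and prob: "prob_space M"
    and b_lip: "\<exists>L. \<forall>t\<in>{0..T}. \<forall>x x' \<mu> \<mu>' w w'. \<mu> \<in> P2 \<longrightarrow> \<mu>' \<in> P2 \<longrightarrow>
        norm (b t x \<mu> w - b t x' \<mu>' w') \<le> L * (norm (x - x') + W2 \<mu> \<mu>' + norm (w - w'))"
    and X_meas: "\<forall>t\<in>{0..T}. X t \<in> borel_measurable M"
    and X_mom: "\<exists>C::real. \<forall>t\<in>{0..T}. (\<integral>\<^sup>+ \<omega>. ennreal (norm (X t \<omega>) ^ 2) \<partial>M) \<le> ennreal C"
    and u_meas: "\<forall>t\<in>{0..T}. u t \<in> borel_measurable M"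
    and v_meas: "\<forall>t\<in>{0..T}. v t \<in> borel_measurable M"
    and u_mom: "\<exists>C::real. \<forall>t\<in>{0..T}. (\<integral>\<^sup>+ \<omega>. ennreal (norm (u t \<omega>) ^ 8) \<partial>M) \<le> ennreal C"
    and v_mom: "\<exists>C::real. \<forall>t\<in>{0..T}. (\<integral>\<^sup>+ \<omega>. ennreal (norm (v t \<omega>) ^ 8) \<partial>M) \<le> ennreal C"
    and bu_meas: "(\<lambda>(s, \<omega>). b s (X s \<omega>) (law M (X s)) (u s \<omega>))
        \<in> borel_measurable (restrict_space lborel {0..T} \<Otimes>\<^sub>M M)"
    and bv_meas: "(\<lambda>(s, \<omega>). b s (X s \<omega>) (law M (X s)) (v s \<omega>))
        \<in> borel_measurable (restrict_space lborel {0..T} \<Otimes>\<^sub>M M)"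
  shows "\<exists>K. L2_bounded_process M T (\<lambda>s \<omega>. indicator {0..T} s *\<^sub>R Delta_b M b X u v s \<omega>) K"
proof -
  obtain L where L: "\<forall>t\<in>{0..T}. \<forall>x x' \<mu> \<mu>' w w'. \<mu> \<in> P2 \<longrightarrow> \<mu>' \<in> P2 \<longrightarrow>
      norm (b t x \<mu> w - b t x' \<mu>' w') \<le> L * (norm (x - x') + W2 \<mu> \<mu>' + norm (w - w'))"
    using b_lip by blast
  obtain CX where CX: "\<forall>t\<in>{0..T}. (\<integral>\<^sup>+ \<omega>. ennreal (norm (X t \<omega>) ^ 2) \<partial>M) \<le> ennreal CX"
    using X_mom by blast
  obtain Cu where Cu: "0 \<le> Cu" "\<forall>t\<in>{0..T}. (\<integral>\<^sup>+ \<omega>. ennreal (norm (u t \<omega>) ^ 8) \<partial>M) \<le> ennreal Cu"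
    using ex_nonneg_ennreal_bound[OF u_mom] by blast
  obtain Cv where Cv: "0 \<le> Cv" "\<forall>t\<in>{0..T}. (\<integral>\<^sup>+ \<omega>. ennreal (norm (v t \<omega>) ^ 8) \<partial>M) \<le> ennreal Cv"
    using ex_nonneg_ennreal_bound[OF v_mom] by blast
  have measurable: "(\<lambda>x. indicator {0..T} (snd x) *\<^sub>R Delta_b M b X u v (snd x) (fst x))
      \<in> borel_measurable (M \<Otimes>\<^sub>M lborel)"
    using measurable_indicator_extension[OF borel_measurable_diff[OF bv_meas bu_meas]] T_pos
    by (simp add: Delta_b_def split_beta')
  have "L2_bounded_process M T (\<lambda>s \<omega>. indicator {0..T} s *\<^sub>R Delta_b M b X u v s \<omega>)
      (2 * (max L 0)\<^sup>2 * (2 + Cu + Cv))"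
  proof (rule L2_bounded_process.intro)
    fix s assume s: "s \<in> {0..T}"
    have "law M (X s) \<in> P2" using law_in_P2[OF prob] X_meas CX s by blast
    with s have "mean_square M (Delta_b M b X u v s) \<le> ennreal (2 * (max L 0)\<^sup>2 * (2 + Cu + Cv))"
      using u_meas v_meas Cu Cv
      by (intro mean_square_Delta_b_le[where b = b and t = s and X = X and M = M, OF prob bspec[OF L s]]) auto
    then show "mean_square M (\<lambda>\<omega>. indicator {0..T} s *\<^sub>R Delta_b M b X u v s \<omega>)
        \<le> ennreal (2 * (max L 0)\<^sup>2 * (2 + Cu + Cv))"
      using s by simp
  qed (use prob T_pos Cu Cv measurable in simp_all)
  then show ?thesis ..
qed

theorem lemma5p2:
  fixes M :: "'a measure" and T :: real and U :: "(real^'k) set"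
    and b :: "real \<Rightarrow> real^'n \<Rightarrow> (real^'n) measure \<Rightarrow> real^'k \<Rightarrow> real^'n"
    and X :: "real \<Rightarrow> 'a \<Rightarrow> real^'n"
    and u v :: "real \<Rightarrow> 'a \<Rightarrow> real^'k"
  assumes T_pos: "T > 0"
    and prob: "prob_space M"
    and b_lip: "\<exists>L. \<forall>t\<in>{0..T}. \<forall>x x' \<mu> \<mu>' w w'. \<mu> \<in> P2 \<longrightarrow> \<mu>' \<in> P2 \<longrightarrow>
        norm (b t x \<mu> w - b t x' \<mu>' w') \<le> L * (norm (x - x') + W2 \<mu> \<mu>' + norm (w - w'))"
    and X_meas: "\<forall>t\<in>{0..T}. X t \<in> borel_measurable M"
    and X_mom: "\<exists>C::real. \<forall>t\<in>{0..T}. (\<integral>\<^sup>+ \<omega>. ennreal (norm (X t \<omega>) ^ 2) \<partial>M) \<le> ennreal C"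
    and u_U: "\<forall>t\<in>{0..T}. \<forall>\<omega>\<in>space M. u t \<omega> \<in> U"
    and v_U: "\<forall>t\<in>{0..T}. \<forall>\<omega>\<in>space M. v t \<omega> \<in> U"
    and u_meas: "\<forall>t\<in>{0..T}. u t \<in> borel_measurable M"
    and v_meas: "\<forall>t\<in>{0..T}. v t \<in> borel_measurable M"
    and u_mom: "\<exists>C::real. \<forall>t\<in>{0..T}. (\<integral>\<^sup>+ \<omega>. ennreal (norm (u t \<omega>) ^ 8) \<partial>M) \<le> ennreal C"
    and v_mom: "\<exists>C::real. \<forall>t\<in>{0..T}. (\<integral>\<^sup>+ \<omega>. ennreal (norm (v t \<omega>) ^ 8) \<partial>M) \<le> ennreal C"
    and bu_meas: "(\<lambda>(s, \<omega>). b s (X s \<omega>) (law M (X s)) (u s \<omega>))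
        \<in> borel_measurable (restrict_space lborel {0..T} \<Otimes>\<^sub>M M)"
    and bv_meas: "(\<lambda>(s, \<omega>). b s (X s \<omega>) (law M (X s)) (v s \<omega>))
        \<in> borel_measurable (restrict_space lborel {0..T} \<Otimes>\<^sub>M M)"
  shows "\<exists>I :: real \<Rightarrow> real set.
    (\<forall>\<rho>\<in>{0<..<1}. I \<rho> \<in> sets borel \<and> I \<rho> \<subseteq> {0..T} \<and> measure lborel (I \<rho>) = \<rho> * T) \<and>
    (\<forall>\<epsilon>>0. \<exists>\<delta>>0. \<forall>\<rho>\<in>{0<..<1}. \<rho> < \<delta> \<longrightarrow> (\<forall>t\<in>{0..T}.
       (\<integral>\<^sup>+ \<omega>. ennreal ((norm (\<rho> *\<^sub>R (LINT s:{0..t}|lborel. Delta_b M b X u v s \<omega>)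
                 - (LINT s:(I \<rho> \<inter> {0..t})|lborel. Delta_b M b X u v s \<omega>))) ^ 2) \<partial>M)
       \<le> ennreal (\<epsilon> * \<rho> ^ 4)))"
proof -
  obtain K where "L2_bounded_process M T (\<lambda>s \<omega>. indicator {0..T} s *\<^sub>R Delta_b M b X u v s \<omega>) K"
    using L2_bounded_process_Delta_b[OF T_pos prob b_lip X_meas X_mom u_meas v_meas u_mom v_mom bu_meas bv_meas]
    by blast
  note family = L2_bounded_process.exists_spike_family[OF this]
  have restrict: "A \<subseteq> {0..T} \<Longrightarrow> (LINT s:A|lborel. indicator {0..T} s *\<^sub>R Delta_b M b X u v s \<omega>)
      = (LINT s:A|lborel. Delta_b M b X u v s \<omega>)" for A \<omega>
    unfolding set_lebesgue_integral_def by (intro Bochner_Integration.integral_cong) (auto simp: indicator_def)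
  have "t \<le> T \<Longrightarrow> A \<inter> {0..t} \<subseteq> {0..T}" for A and t :: real by auto
  with family show ?thesis by (simp add: restrict)
qed

end
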